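(* Let $1\leq p<\infty$ and let $N>2$ be an integer. For each integer $i$ with $1\leq i\leq N$, let $T_i=T_{f_i,w^{(i)}}$ be the bilateral weighted pseudo-shift on $\ell^p(\mathbb{Z})$ induced by an invertible map $f_i:\mathbb{Z}\to\mathbb{Z}$ and a bounded nonzero weight sequence $w^{(i)}=(w^{(i)}_m)_{m\in\mathbb{Z}}$. For $m\in\mathbb{Z}$ and $n\in\mathbb{N}$ let $W^{(i)}_{m,n}=\prod_{v=1}^{n}w^{(i)}_{f_i^{v}(m)}$ and $W^{(i)}_{m,-n}=\prod_{v=0}^{n-1}w^{(i)}_{f_i^{-v}(m)}$. Suppose that there exists a strictly increasing sequence $(n_k)_{k\in\mathbb{N}}$ of positive integers such that: (a) for each integer $i$ with $1\leq i\leq N$ and each $m\in\mathbb{Z}$, $|W^{(i)}_{m,n_k}|\to\infty$ and $|W^{(i)}_{m,-n_k}|\to 0$ as $k\to\infty$; and (b) for each $\varepsilon>0$, integers $K,M\in\mathbb{N}$, and finite collection $\{a^{(i)}_j:-M\leq j\leq M,\ 1\leq i\leq N\}$ of nonzero scalars in $\mathbb{K}\setminus\{0\}$, there exists an integer $k\geq K$ such that for all integers $i,\ell$ with $1\leq i,\ell\leq N$ and $i\neq\ell$, \[\left|\frac{W^{(i)}_{f_i^{-n_k}(j),n_k}}{W^{(\ell)}_{f_\ell^{-n_k}(j),n_k}}\right|<\varepsilon\quad\text{whenever } j\in f_\ell^{n_k}([M])\cap f_i^{n_k}(\mathbb{Z}\setminus[M]),\] and \[\left|\frac{W^{(i)}_{f_i^{-n_k}(j),n_k}}{W^{(\ell)}_{f_\ell^{-n_k}(j),n_k}}-\frac{a^{(i)}_{f_i^{-n_k}(j)}}{a^{(\ell)}_{f_\ell^{-n_k}(j)}}\right|<\varepsilon\quad\text{whenever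 } j\in f_\ell^{n_k}([M])\cap f_i^{n_k}([M]),\] where $[M]=\{-M,-M+1,\dots,0,\dots,M\}$. Then $T_1,\dots,T_N$ satisfy the Disjoint Blow-up/Collapse Criterion. In particular, $T_1,\dots,T_N$ are disjoint hypercyclic.
   Context: $\mathbb{K}$ denotes the scalar field ($\mathbb{R}$ or $\mathbb{C}$); $(e_j)_{j\in\mathbb{Z}}$ is the canonical basis of $\ell^p(\mathbb{Z})$. Bilateral weighted pseudo-shift: given an invertible map $f:\mathbb{Z}\to\mathbb{Z}$ and a bounded nonzero weight sequence $w=(w_j)_{j\in\mathbb{Z}}$, $T_{f,w}\big(\sum_{j\in\mathbb{Z}}x_je_j\big)=\sum_{j\in\mathbb{Z}}w_{f(j)}x_{f(j)}e_j$; thus $T_{f,w}^n e_m=W_{m,-n}e_{f^{-n}(m)}$ and $T_{f,w}^n e_{f^n(m)}=W_{m,n}e_m$. Operators $T_1,\dots,T_N$ ($N\geq 2$) on a separable Banach space $X$ are disjoint hypercyclic if there is $x\in X$ such that $\{(T_1^nx,\dots,T_N^nx):n\in\mathbb{N}\}$ is dense in $X^N$. Disjoint Blow-up/Collapse Criterion: operators $T_1,\dots,T_N\in\mathcal{L}(X)$ ($N\ge 2$) satisfy it if there exist a strictly increasing sequence $(n_k)$ of positive integers, a dense subset $X_0\subset X$ and maps $S_k:\bigoplus_{i=1}^N X_0\to X$ such that (i) for each $x\in X_0$ and $1\leq i\leq N$, $T_i^{n_k}x\to 0$ as $k\to\infty$; (ii) for each $\varepsilon>0$, integer $K\in\mathbb{N}$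 and $x_1,\dots,x_N\in X_0$ there is an integer $k\geq K$ with $\|S_k(x_1,\dots,x_N)\|<\varepsilon$ and $\|T_i^{n_k}S_k(x_1,\dots,x_N)-x_i\|<\varepsilon$ for $1\leq i\leq N$. *)

theory Defs
  imports "HOL-Analysis.Analysis"
begin

definition lp :: "real \<Rightarrow> (int \<Rightarrow> 'a::real_normed_vector) set" where
  "lp p = {x. (\<lambda>j. norm (x j) powr p) summable_on UNIV}"

definition lp_norm :: "real \<Rightarrow> (int \<Rightarrow> 'a::real_normed_vector) \<Rightarrow> real" where
  "lp_norm p x = (\<Sum>\<^sub>\<infinity>j. norm (x j) powr p) powr (1 / p)"

definition pseudo_shift :: "(int \<Rightarrow> int) \<Rightarrow> (int \<Rightarrow> 'a::real_normed_field) \<Rightarrow> (int \<Rightarrow> 'a) \<Rightarrow> (int \<Rightarrow> 'a)" where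
  "pseudo_shift f w x = (\<lambda>j. w (f j) * x (f j))"

definition Wpos :: "(int \<Rightarrow> int) \<Rightarrow> (int \<Rightarrow> 'a::real_normed_field) \<Rightarrow> int \<Rightarrow> nat \<Rightarrow> 'a" where
  "Wpos f w m n = (\<Prod>v\<in>{1..n}. w ((f ^^ v) m))"

definition Wneg :: "(int \<Rightarrow> int) \<Rightarrow> (int \<Rightarrow> 'a::real_normed_field) \<Rightarrow> int \<Rightarrow> nat \<Rightarrow> 'a" where
  "Wneg f w m n = (\<Prod>v\<in>{0..<n}. w ((inv f ^^ v) m))"

definition bounded_linear_lp :: "real \<Rightarrow> ((int \<Rightarrow> 'a::real_normed_field) \<Rightarrow> (int \<Rightarrow> 'a)) \<Rightarrow> bool" where
  "bounded_linear_lp p T \<longleftrightarrow>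
     (\<forall>x\<in>lp p. T x \<in> lp p) \<and>
     (\<forall>x\<in>lp p. \<forall>y\<in>lp p. T (\<lambda>j. x j + y j) = (\<lambda>j. T x j + T y j)) \<and>
     (\<forall>c. \<forall>x\<in>lp p. T (\<lambda>j. c * x j) = (\<lambda>j. c * T x j)) \<and>
     (\<exists>C. \<forall>x\<in>lp p. lp_norm p (T x) \<le> C * lp_norm p x)"

definition disjoint_hypercyclic :: "real \<Rightarrow> nat \<Rightarrow> (nat \<Rightarrow> (int \<Rightarrow> 'a::real_normed_field) \<Rightarrow> (int \<Rightarrow> 'a)) \<Rightarrow> bool" where
  "disjoint_hypercyclic p N T \<longleftrightarrow>
     (\<exists>x\<in>lp p. \<forall>y. (\<forall>i\<in>{1..N}. y i \<in> lp p) \<longrightarrow>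
        (\<forall>\<epsilon>>0. \<exists>n::nat. \<forall>i\<in>{1..N}. lp_norm p (\<lambda>j. (T i ^^ n) x j - y i j) < \<epsilon>))"

text \<open>Tuples \<open>(x_1,\<dots>,x_N)\<close> are functions \<open>nat \<Rightarrow> _\<close> of which indices \<open>1..N\<close> are used.\<close>

definition dBC_criterion :: "real \<Rightarrow> nat \<Rightarrow> (nat \<Rightarrow> (int \<Rightarrow> 'a::real_normed_field) \<Rightarrow> (int \<Rightarrow> 'a)) \<Rightarrow> bool" where
  "dBC_criterion p N T \<longleftrightarrow>
     (\<forall>i\<in>{1..N}. bounded_linear_lp p (T i)) \<and>
     (\<exists>(nk::nat \<Rightarrow> nat) X0 (S::nat \<Rightarrow> (nat \<Rightarrow> int \<Rightarrow> 'a) \<Rightarrow> (int \<Rightarrow> 'a)).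
        strict_mono nk \<and> (\<forall>k. 0 < nk k) \<and>
        X0 \<subseteq> lp p \<and>
        (\<forall>y\<in>lp p. \<forall>\<epsilon>>0. \<exists>x\<in>X0. lp_norm p (\<lambda>j. x j - y j) < \<epsilon>) \<and>
        (\<forall>k xs. (\<forall>i\<in>{1..N}. xs i \<in> X0) \<longrightarrow> S k xs \<in> lp p) \<and>
        (\<forall>x\<in>X0. \<forall>i\<in>{1..N}. (\<lambda>k. lp_norm p ((T i ^^ nk k) x)) \<longlonglongrightarrow> 0) \<and>
        (\<forall>\<epsilon>>0. \<forall>K::nat. \<forall>xs. (\<forall>i\<in>{1..N}. xs i \<in> X0) \<longrightarrow>
           (\<exists>k\<ge>K. lp_norm p (S k xs) < \<epsilon> \<and>
              (\<forall>i\<in>{1..N}. lp_norm p (\<lambda>j. (T i ^^ nk k) (S k xs) j - xs i j) < \<epsilon>))))"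

end

(* The criterion is verified with X0 the finitely supported sequences and with
   S_k placing x_i(m) / W^(i)_(m,n_k) at position f_i^(n_k)(m). Condition (a) makes both
   T_i^(n_k) x and S_k(x_1,...,x_N) small, and condition (b) controls T_l^(n_k) S_k - x_l at the
   positions where the shifted supports of different x_i collide. Disjoint hypercyclicity then
   follows from the criterion by a Baire category argument in l^p(Z), which is separable because,
   by Ostrowski's theorem, every real normed field is spanned over R by at most two elements. *)

theory Submission
  imports Defs "HOL-Computational_Algebra.Fundamental_Theorem_Algebra"
begin

section \<open>Real normed fields are separable\<close>

lemma map_poly_of_real_add:
  "map_poly (of_real :: real \<Rightarrow> 'b::{real_algebra_1,comm_ring_1}) (p + q) =
     map_poly of_real p + map_poly of_real q"
  by (rule poly_eqI) (simp add: coeff_map_poly)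

lemma map_poly_of_real_mult:
  "map_poly (of_real :: real \<Rightarrow> 'b::{real_algebra_1,comm_ring_1}) (p * q) =
     map_poly of_real p * map_poly of_real q"
  by (rule poly_eqI) (simp add: coeff_map_poly coeff_mult of_real_sum)

lemma map_poly_of_real_power:
  "map_poly (of_real :: real \<Rightarrow> 'b::{real_algebra_1,comm_ring_1}) (p ^ n) = map_poly of_real p ^ n"
  by (induction n) (auto simp: map_poly_of_real_mult)

lemma map_poly_of_real_prod:
  "map_poly (of_real :: real \<Rightarrow> 'b::{real_algebra_1,comm_ring_1}) (\<Prod>i\<in>A. P i) =
     (\<Prod>i\<in>A. map_poly of_real (P i))"
  by (induction A rule: infinite_finite_induct) (auto simp: map_poly_of_real_mult)

lemma map_poly_of_real_inject:
  assumes "map_poly (of_real :: real \<Rightarrow> 'b::{real_algebra_1,comm_ring_1}) p = map_poly of_real q"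
  shows "p = q"
proof (rule poly_eqI)
  fix k
  have "coeff (map_poly (of_real :: real \<Rightarrow> 'b) p) k = coeff (map_poly of_real q) k"
    using assms by simp
  then show "coeff p k = coeff q k" by (simp add: coeff_map_poly)
qed

lemma map_poly_cnj_mult: "map_poly cnj (p * q) = map_poly cnj p * map_poly cnj q"
  by (rule poly_eqI) (simp add: coeff_map_poly coeff_mult cnj_sum)

lemma map_poly_cnj_prod: "map_poly cnj (\<Prod>i\<in>A. P i) = (\<Prod>i\<in>A. map_poly cnj (P i))"
  by (induction A rule: infinite_finite_induct) (auto simp: map_poly_cnj_mult)

lemma map_poly_cnj_of_real: "map_poly cnj (map_poly of_real p) = map_poly of_real p"
  by (rule poly_eqI) (simp add: coeff_map_poly)

definition conj_quadratic :: "complex \<Rightarrow> real poly" where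
  "conj_quadratic z = [:(cmod z)\<^sup>2, -2 * Re z, 1:]"

lemma conj_quadratic_factor: "map_poly of_real (conj_quadratic z) = [:-z, 1:] * [:-cnj z, 1:]"
proof -
  have "(cmod z)\<^sup>2 = (Re z)\<^sup>2 + (Im z)\<^sup>2" by (simp add: cmod_power2)
  then show ?thesis
    by (simp add: conj_quadratic_def map_poly_pCons complex_eq_iff power2_eq_square algebra_simps)
qed

lemma eval_conj_quadratic:
  "poly (map_poly of_real (conj_quadratic z)) \<xi> =
     \<xi>\<^sup>2 - of_real (2 * Re z) * \<xi> + of_real ((cmod z)\<^sup>2)"
  by (simp add: conj_quadratic_def map_poly_pCons power2_eq_square algebra_simps)

text \<open>Splitting a monic real polynomial over \<open>\<complex>\<close> as \<open>G = \<Prod>i. (X - r i)\<close> gives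
  \<open>G\<^sup>2 = G \<cdot> cnj G = \<Prod>i. (X - r i)(X - cnj (r i))\<close>, a product of real quadratics.\<close>

lemma monic_real_poly_square_eq_prod_conj_quadratic:
  fixes G :: "real poly"
  assumes "lead_coeff G = 1"
  obtains r where "G * G = (\<Prod>i<degree G. conj_quadratic (r i))"
    "\<And>z. poly (map_poly of_real G) z = 0 \<Longrightarrow> \<exists>i<degree G. r i = z"
proof -
  define Gc where "Gc = (map_poly of_real G :: complex poly)"
  have "degree Gc = degree G" "lead_coeff Gc = 1"
    using assms by (simp_all add: Gc_def degree_map_poly coeff_map_poly)
  moreover obtain r where "smult (lead_coeff Gc) (\<Prod>i<degree Gc. [:-r i, 1:]) = Gc"
    using complex_poly_decompose' by blast
  ultimately have Gc_split: "Gc = (\<Prod>i<degree G. [:-r i, 1:])" by simp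
  have "map_poly of_real (G * G) = Gc * map_poly cnj Gc"
    by (simp add: Gc_def map_poly_of_real_mult map_poly_cnj_of_real)
  also have "\<dots> = (\<Prod>i<degree G. [:-r i, 1:]) * (\<Prod>i<degree G. [:-cnj (r i), 1:])"
    by (subst (2) Gc_split, subst Gc_split) (simp add: map_poly_cnj_prod map_poly_pCons)
  also have "\<dots> = (\<Prod>i<degree G. [:-r i, 1:] * [:-cnj (r i), 1:])"
    by (simp only: prod.distrib)
  also have "\<dots> = map_poly of_real (\<Prod>i<degree G. conj_quadratic (r i))"
    by (simp add: conj_quadratic_factor map_poly_of_real_prod)
  finally have "G * G = (\<Prod>i<degree G. conj_quadratic (r i))"
    by (rule map_poly_of_real_inject)
  moreover have "\<exists>i<degree G. r i = z" if "poly (map_poly of_real G) z = 0" for z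
    using that by (auto simp: Gc_def[symmetric] Gc_split poly_prod prod_zero_iff)
  ultimately show ?thesis using that by blast
qed

lemma monic_power_add_const:
  fixes Q :: "'b::idom poly"
  assumes "lead_coeff Q = 1" "degree Q = d" "d \<ge> 1" "n \<ge> 1"
  shows "degree (Q ^ n + [:c:]) = d * n" "lead_coeff (Q ^ n + [:c:]) = 1"
proof -
  have "Q \<noteq> 0" using assms(1) by auto
  then have deg: "degree (Q ^ n) = d * n" using assms(2) by (simp add: degree_power_eq)
  moreover have "d * n > 0" using assms(3,4) by simp
  ultimately show "degree (Q ^ n + [:c:]) = d * n" by (subst degree_add_eq_left) auto
  moreover have "coeff [:c:] (d * n) = 0" using \<open>d * n > 0\<close> by (cases "d * n") auto
  ultimately show "lead_coeff (Q ^ n + [:c:]) = 1"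
    using deg lead_coeff_power[of Q n] assms(1) by simp
qed

lemma conj_quadratic_power_estimate:
  fixes \<xi> :: "'a::real_normed_field"
  defines "E \<equiv> \<lambda>q. poly (map_poly (of_real :: real \<Rightarrow> 'a) q) \<xi>"
  assumes min: "\<And>z. m \<le> norm (E (conj_quadratic z))"
    and z0: "norm (E (conj_quadratic z0)) = m"
    and \<epsilon>: "\<epsilon> > 0" and n: "n \<ge> 1"
    and z1: "poly (map_poly of_real (conj_quadratic z0)) z1 = - (of_real \<epsilon> :: complex)"
  shows "norm (E (conj_quadratic z1)) * m ^ (2*n - 1) \<le> (m ^ n + \<epsilon> ^ n)\<^sup>2"
proof -
  define Q where "Q = conj_quadratic z0"
  define G where "G = Q ^ n + [:- ((-\<epsilon>) ^ n):]"
  have "degree Q = 2" "lead_coeff Q = 1" by (simp_all add: Q_def conj_quadratic_def)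
  then have degG: "degree G = 2 * n" and "lead_coeff G = 1"
    unfolding G_def using monic_power_add_const[of Q 2 n] n by (simp_all add: mult.commute)
  then obtain r where GG: "G * G = (\<Prod>i<2*n. conj_quadratic (r i))"
    and roots: "\<And>z. poly (map_poly of_real G) z = 0 \<Longrightarrow> \<exists>i<2*n. r i = z"
    using monic_real_poly_square_eq_prod_conj_quadratic degG by metis
  have "norm (E G) ^ 2 = (\<Prod>i<2*n. norm (E (conj_quadratic (r i))))"
  proof -
    have "norm (E G) ^ 2 = norm (E (G * G))"
      by (simp add: E_def map_poly_of_real_mult norm_mult power2_eq_square)
    then show ?thesis
      by (simp add: GG E_def map_poly_of_real_prod poly_prod prod_norm)
  qed
  moreover obtain i0 where i0: "i0 < 2 * n" "r i0 = z1"
  proof -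
    have "poly (map_poly of_real G) z1 = 0"
      by (simp add: G_def Q_def map_poly_of_real_add map_poly_of_real_power z1 map_poly_pCons)
    then show ?thesis using that roots by blast
  qed
  moreover have "norm (E (conj_quadratic z1)) * m ^ (2*n - 1) \<le>
      (\<Prod>i<2*n. norm (E (conj_quadratic (r i))))"
  proof -
    have "m ^ (2*n - 1) = (\<Prod>i\<in>{..<2*n} - {i0}. m)" using i0 by simp
    also have "\<dots> \<le> (\<Prod>i\<in>{..<2*n} - {i0}. norm (E (conj_quadratic (r i))))"
      using min z0 by (intro prod_mono) (auto intro: order_trans[OF norm_ge_zero])
    finally show ?thesis
      using i0 by (subst prod.remove[of _ i0]) (auto intro: mult_left_mono)
  qed
  moreover have "norm (E G) \<le> m ^ n + \<epsilon> ^ n"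
  proof -
    have "E G = E Q ^ n - of_real ((-\<epsilon>) ^ n)"
      by (simp add: E_def G_def map_poly_of_real_add map_poly_of_real_power map_poly_pCons)
    then have "norm (E G) \<le> norm (E Q) ^ n + norm (of_real ((-\<epsilon>) ^ n) :: 'a)"
      by (metis norm_power norm_triangle_ineq4)
    then show ?thesis using z0 \<epsilon> by (simp add: Q_def norm_power)
  qed
  ultimately show ?thesis
    by (smt (verit) norm_ge_zero power_mono)
qed

lemma coercive_min_of_max_norm:
  fixes \<phi> :: "'b::{real_normed_vector,heine_borel} \<Rightarrow> real"
  assumes cont: "continuous_on UNIV \<phi>"
    and coercive: "\<And>z. norm z > R \<Longrightarrow> \<phi> z > \<phi> 0"
  obtains z0 where "\<And>z. \<phi> z0 \<le> \<phi> z" "\<And>z. \<phi> z = \<phi> z0 \<Longrightarrow> norm z \<le> norm z0"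
proof -
  have R: "R \<ge> 0" using coercive[of 0] by force
  have "cball 0 R \<noteq> {}" using R by simp
  then obtain zm where zm: "zm \<in> cball 0 R" "\<And>z. z \<in> cball 0 R \<Longrightarrow> \<phi> zm \<le> \<phi> z"
    using continuous_attains_inf[OF compact_cball _ continuous_on_subset[OF cont subset_UNIV]]
    by blast
  have min: "\<phi> zm \<le> \<phi> z" for z
    using zm(2)[of z] zm(2)[of 0] coercive[of z] R by (cases "norm z \<le> R") auto
  define S where "S = cball 0 R \<inter> {z. \<phi> z = \<phi> zm}"
  have "compact S"
    unfolding S_def using cont
    by (intro compact_Int_closed compact_cball closed_Collect_eq) (auto intro: continuous_on_const)
  moreover have "zm \<in> S" using zm by (simp add: S_def)
  ultimately obtain z0 where z0: "z0 \<in> S" "\<And>z. z \<in> S \<Longrightarrow> norm z \<le> norm z0"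
    using continuous_attains_sup[of S norm] by (auto intro: continuous_intros)
  have "norm z \<le> norm z0" if "\<phi> z = \<phi> z0" for z
  proof (cases "norm z \<le> R")
    case True then show ?thesis using z0 that by (simp add: S_def)
  next
    case False then show ?thesis using z0 that coercive[of z] min[of 0] by (simp add: S_def)
  qed
  moreover have "\<phi> z0 \<le> \<phi> z" for z using z0 min[of z] by (simp add: S_def)
  ultimately show ?thesis using that by blast
qed

lemma norm_eval_conj_quadratic_coercive:
  fixes \<xi> :: "'a::real_normed_field"
  assumes z: "cmod z > 3 * norm \<xi> + 1"
  shows "norm (poly (map_poly of_real (conj_quadratic z)) \<xi>) > (norm \<xi>)\<^sup>2"
proof -
  let ?A = "\<xi>\<^sup>2" and ?B = "of_real (2 * Re z) * \<xi>" and ?C = "of_real ((cmod z)\<^sup>2) :: 'a"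
  have "?C = (?A - ?B + ?C) + ?B - ?A" by simp
  then have "norm ?C \<le> norm (?A - ?B + ?C) + norm ?B + norm ?A"
    by (smt (verit) norm_triangle_ineq norm_triangle_ineq4)
  moreover have "norm ?B \<le> 2 * cmod z * norm \<xi>"
    by (simp add: norm_mult mult_right_mono abs_Re_le_cmod)
  moreover have "(cmod z)\<^sup>2 - 2 * cmod z * norm \<xi> - (norm \<xi>)\<^sup>2 > (norm \<xi>)\<^sup>2"
  proof -
    have "(2 * norm \<xi>)\<^sup>2 < (cmod z - norm \<xi>)\<^sup>2"
      using z by (intro power_strict_mono) auto
    then have "4 * (norm \<xi>)\<^sup>2 < (cmod z)\<^sup>2 + (norm \<xi>)\<^sup>2 - 2 * cmod z * norm \<xi>"
      by (simp only: power2_diff power_mult_distrib) simp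
    then show ?thesis using zero_le_power2[of "norm \<xi>"] by linarith
  qed
  ultimately show ?thesis by (simp add: eval_conj_quadratic norm_power)
qed

lemma le_of_power_estimate:
  fixes a m :: real
  assumes m: "m > 0" and est: "\<And>n. n \<ge> 1 \<Longrightarrow> a * m ^ (2*n - 1) \<le> (m ^ n + (m / 2) ^ n)\<^sup>2"
  shows "a \<le> m"
proof (rule LIMSEQ_le_const)
  show "(\<lambda>n. m * (1 + (1/2) ^ n)\<^sup>2) \<longlonglongrightarrow> m"
    using tendsto_mult[OF tendsto_const[of m] tendsto_power[OF tendsto_add[OF tendsto_const[of 1]
        LIMSEQ_power_zero[of "1/2::real"]], of 2]] by simp
  have "a \<le> m * (1 + (1/2) ^ n)\<^sup>2" if n: "n \<ge> 1" for n
  proof -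
    have "2 * n = Suc (2 * n - 1)" using n by simp
    then have "m ^ (2 * n) = m * m ^ (2*n - 1)" by (metis power_Suc)
    then have "(m ^ n + (m / 2) ^ n)\<^sup>2 = (m * (1 + (1/2) ^ n)\<^sup>2) * m ^ (2*n - 1)"
      by (simp add: power_mult_distrib power_divide power2_eq_square algebra_simps
          flip: power_add mult_2)
    then show ?thesis using est[OF n] m by simp
  qed
  then show "\<exists>N. \<forall>n\<ge>N. a \<le> m * (1 + (1/2) ^ n)\<^sup>2" by blast
qed

text \<open>Ostrowski's argument: minimise \<open>z \<mapsto> \<parallel>(\<xi> - z)(\<xi> - cnj z)\<parallel>\<close> over \<open>\<complex>\<close>, at a minimiser \<open>z\<^sub>0\<close> of
  maximal modulus. If the minimum \<open>m\<close> were positive, the point \<open>z\<^sub>1\<close> of larger modulus with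
  \<open>(z\<^sub>1 - z\<^sub>0)(z\<^sub>1 - cnj z\<^sub>0) = -m/2\<close> would be a minimiser as well, by the power estimate.\<close>

lemma real_normed_field_quadratic:
  fixes \<xi> :: "'a::real_normed_field"
  obtains b c :: real where "\<xi>\<^sup>2 + of_real b * \<xi> + of_real c = 0"
proof -
  define E where "E q = poly (map_poly (of_real :: real \<Rightarrow> 'a) q) \<xi>" for q
  define \<phi> where "\<phi> z = norm (E (conj_quadratic z))" for z
  have cont: "continuous_on UNIV \<phi>"
    unfolding \<phi>_def E_def eval_conj_quadratic by (intro continuous_intros)
  have "\<phi> z > \<phi> 0" if "cmod z > 3 * norm \<xi> + 1" for z
    using norm_eval_conj_quadratic_coercive[OF that]
    by (simp add: \<phi>_def E_def eval_conj_quadratic norm_power)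
  then obtain z0 where min: "\<And>z. \<phi> z0 \<le> \<phi> z"
    and max_norm: "\<And>z. \<phi> z = \<phi> z0 \<Longrightarrow> cmod z \<le> cmod z0"
    using coercive_min_of_max_norm[OF cont] by blast
  define m where "m = \<phi> z0"
  have "m = 0"
  proof (rule ccontr)
    assume "m \<noteq> 0"
    then have m: "m > 0" by (simp add: m_def \<phi>_def)
    define z1 where "z1 = Complex (Re z0) (sqrt ((Im z0)\<^sup>2 + m / 2))"
    have z1_root: "poly (map_poly of_real (conj_quadratic z0)) z1 = - of_real (m / 2)"
    proof -
      have "(cmod z0)\<^sup>2 = (Re z0)\<^sup>2 + (Im z0)\<^sup>2" by (simp add: cmod_power2)
      then show ?thesis using m
        by (simp add: conj_quadratic_def map_poly_pCons complex_eq_iff z1_def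
            power2_eq_square algebra_simps)
    qed
    have "(cmod z1)\<^sup>2 > (cmod z0)\<^sup>2" using m by (simp add: z1_def cmod_power2)
    then have "cmod z1 > cmod z0" by (rule power_less_imp_less_base) simp
    then have "\<phi> z1 > m" using max_norm[of z1] min[of z1] by (force simp: m_def)
    moreover have "\<phi> z1 \<le> m"
    proof (rule le_of_power_estimate[OF m])
      show "\<phi> z1 * m ^ (2*n - 1) \<le> (m ^ n + (m / 2) ^ n)\<^sup>2" if "n \<ge> 1" for n
        using conj_quadratic_power_estimate[of m \<xi> z0 "m / 2" n z1] min m that z1_root
        unfolding \<phi>_def E_def m_def by simp
    qed
    ultimately show False by simp
  qed
  then have "\<xi>\<^sup>2 + of_real (- 2 * Re z0) * \<xi> + of_real ((cmod z0)\<^sup>2) = 0"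
    by (simp add: m_def \<phi>_def E_def eval_conj_quadratic)
  then show ?thesis using that by blast
qed

lemma real_normed_field_real_or_imag:
  fixes y :: "'a::real_normed_field"
  shows "(\<exists>r. y = of_real r) \<or> (\<exists>r s j. y = of_real r + of_real s * j \<and> j\<^sup>2 = -1)"
proof -
  obtain b c :: real where "y\<^sup>2 + of_real b * y + of_real c = 0"
    using real_normed_field_quadratic by blast
  then have yy: "y\<^sup>2 + of_real b * y = - of_real c" by (simp add: eq_neg_iff_add_eq_0)
  have "(y + of_real (b/2))\<^sup>2 = y\<^sup>2 + of_real b * y + of_real ((b/2)\<^sup>2)"
    by (simp add: power2_eq_square algebra_simps flip: of_real_mult)
  also have "\<dots> = of_real (b\<^sup>2/4 - c)" by (simp add: yy of_real_diff power_divide)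
  finally have sq: "(y + of_real (b/2))\<^sup>2 = of_real (b\<^sup>2/4 - c)" .
  show ?thesis
  proof (cases "b\<^sup>2/4 - c \<ge> 0")
    case True
    define q where "q = sqrt (b\<^sup>2/4 - c)"
    have "(y + of_real (b/2))\<^sup>2 = (of_real q)\<^sup>2"
      using sq True by (simp add: q_def flip: of_real_power)
    then have "y = of_real (q - b/2) \<or> y = of_real (- q - b/2)"
      by (auto simp: power2_eq_iff algebra_simps)
    then show ?thesis by blast
  next
    case False
    define q where "q = sqrt (c - b\<^sup>2/4)"
    have q: "q > 0" "q\<^sup>2 = c - b\<^sup>2/4" using False by (simp_all add: q_def)
    define j where "j = (y + of_real (b/2)) / of_real q"
    have "j\<^sup>2 = of_real (b\<^sup>2/4 - c) / of_real (q\<^sup>2)"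
      unfolding j_def power_divide sq of_real_power ..
    also have "\<dots> = -1"
    proof -
      have "b\<^sup>2/4 - c = - (q\<^sup>2)" using q by simp
      then show ?thesis using q(1) by simp
    qed
    finally have "j\<^sup>2 = -1" .
    moreover have "y = of_real (- b/2) + of_real q * j" using q by (simp add: j_def field_simps)
    ultimately show ?thesis by blast
  qed
qed

lemma real_normed_field_span2:
  obtains c :: "'a::real_normed_field" where "\<And>x. \<exists>r s::real. x = of_real r + of_real s * c"
proof (cases "\<forall>x::'a. \<exists>r. x = of_real r")
  case True
  then show ?thesis using that[of 0] by auto
next
  case False
  then obtain i :: 'a where i: "i\<^sup>2 = -1"
    using real_normed_field_real_or_imag by blast
  have "\<exists>r s::real. x = of_real r + of_real s * i" for x
  proof -
    consider r where "x = of_real r" | r s j where "x = of_real r + of_real s * j" "j\<^sup>2 = -1"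
      using real_normed_field_real_or_imag by blast
    then show ?thesis
    proof cases
      case (1 r)
      then have "x = of_real r + of_real 0 * i" by simp
      then show ?thesis by blast
    next
      case (2 r s j)
      then have "j = i \<or> j = - i" using i power2_eq_iff[of j i] by simp
      then have "x = of_real r + of_real s * i \<or> x = of_real r + of_real (- s) * i"
        using 2 by auto
      then show ?thesis by blast
    qed
  qed
  then show ?thesis by (rule that)
qed

lemma real_normed_field_countable_dense:
  obtains Q :: "'a::real_normed_field set"
  where "countable Q" "\<And>x e. e > 0 \<Longrightarrow> \<exists>q\<in>Q. norm (x - q) < e"
proof -
  obtain c :: 'a where c: "\<And>x. \<exists>r s::real. x = of_real r + of_real s * c"
    using real_normed_field_span2 by blast
  define Q where "Q = (\<lambda>(a, b). of_real a + of_real b * c) ` (\<rat> \<times> \<rat>)"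
  have "countable Q" unfolding Q_def by (intro countable_image countable_SIGMA countable_rat)
  moreover have "\<exists>q\<in>Q. norm (x - q) < e" if e: "e > 0" for x e
  proof -
    obtain r s where x: "x = of_real r + of_real s * c" using c by blast
    define C where "C = norm c + 1"
    have C: "C > 0" by (simp add: C_def add_nonneg_pos)
    obtain a where a: "a \<in> \<rat>" "\<bar>r - a\<bar> < e/2"
      using Rats_dense_in_real[of "r - e/2" "r"] e by (auto simp: abs_if)
    obtain b where b: "b \<in> \<rat>" "\<bar>s - b\<bar> < e/(2*C)"
      using Rats_dense_in_real[of "s - e/(2*C)" "s"] e C by (auto simp: abs_if)
    have "norm (x - (of_real a + of_real b * c)) \<le> \<bar>r - a\<bar> + \<bar>s - b\<bar> * norm c"
    proof -
      have "x - (of_real a + of_real b * c) = of_real (r - a) + of_real (s - b) * c"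
        by (simp add: x algebra_simps)
      then show ?thesis by (metis norm_triangle_ineq norm_mult norm_of_real)
    qed
    also have "\<bar>s - b\<bar> * norm c \<le> \<bar>s - b\<bar> * C" by (intro mult_left_mono) (auto simp: C_def)
    also have "\<bar>s - b\<bar> * C < e/2" using b C by (simp add: field_simps)
    finally have "norm (x - (of_real a + of_real b * c)) < e" using a by linarith
    moreover have "of_real a + of_real b * c \<in> Q" using a b by (auto simp: Q_def)
    ultimately show ?thesis by blast
  qed
  ultimately show ?thesis using that by blast
qed

section \<open>The sequence spaces \<open>\<ell>\<^sup>p(\<int>)\<close>\<close>

lemma powr_convex_comb:
  fixes u v t p :: real
  assumes p: "1 \<le> p" and t: "0 \<le> t" "t \<le> 1" and uv: "0 \<le> u" "0 \<le> v"
  shows "((1 - t) * u + t * v) powr p \<le> (1 - t) * u powr p + t * v powr p"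
proof -
  have le_self: "s powr p \<le> s" if "0 \<le> s" "s \<le> 1" for s :: real
    using powr_mono'[of 1 p s] that p by simp
  consider "u > 0" "v > 0" | "u = 0" | "v = 0" using uv by fastforce
  then show ?thesis
  proof cases
    case 1
    then show ?thesis using convex_onD[OF powr_convex[OF p], of t u v] t by simp
  next
    case 2
    have "t powr p * v powr p \<le> t * v powr p" by (intro mult_right_mono le_self) (use t in auto)
    then show ?thesis using 2 by (simp add: powr_mult)
  next
    case 3
    have "(1 - t) powr p * u powr p \<le> (1 - t) * u powr p"
      by (intro mult_right_mono le_self) (use t in auto)
    then show ?thesis using 3 by (simp add: powr_mult)
  qed
qed

text \<open>Convexity of \<open>t \<mapsto> t powr p\<close> at the point \<open>(u + v)/(a + b)\<close>, written as a convex
  combination of \<open>u/a\<close> and \<open>v/b\<close>.\<close>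

lemma powr_add_le_convex_split:
  fixes u v a b p :: real
  assumes p: "1 \<le> p" and ab: "a > 0" "b > 0" and uv: "u \<ge> 0" "v \<ge> 0"
  shows "(u + v) powr p \<le>
    (a + b) powr p * (a / (a + b) * (u / a) powr p + b / (a + b) * (v / b) powr p)"
proof -
  define t where "t = b / (a + b)"
  have t: "0 \<le> t" "t \<le> 1" "1 - t = a / (a + b)" using ab by (auto simp: t_def field_simps)
  have "(a + b) * (1 - t) = a" "(a + b) * t = b" using ab by (auto simp: t_def field_simps)
  then have "u + v = (a + b) * ((1 - t) * (u / a) + t * (v / b))"
    using ab by (simp add: distrib_left flip: mult.assoc)
  then have "(u + v) powr p = (a + b) powr p * ((1 - t) * (u / a) + t * (v / b)) powr p"
    using ab uv t by (simp add: powr_mult)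
  also have "\<dots> \<le> (a + b) powr p * ((1 - t) * (u / a) powr p + t * (v / b) powr p)"
    using ab uv t by (intro mult_left_mono powr_convex_comb p) auto
  finally show ?thesis unfolding t(3) by (simp add: t_def)
qed

lemma sum_powr_le_powr_sum:
  fixes a :: "'b \<Rightarrow> real"
  assumes p: "1 \<le> p" and F: "finite F" and a: "\<And>j. j \<in> F \<Longrightarrow> a j \<ge> 0"
  shows "(\<Sum>j\<in>F. a j powr p) \<le> (\<Sum>j\<in>F. a j) powr p"
proof -
  define S where "S = (\<Sum>j\<in>F. a j)"
  show ?thesis
  proof (cases "S = 0")
    case True
    then have "\<forall>j\<in>F. a j = 0" using sum_nonneg_eq_0_iff[OF F] a unfolding S_def by blast
    then show ?thesis using p by simp
  next
    case False
    then have S: "S > 0" using a by (simp add: S_def order_le_neq_trans sum_nonneg)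
    have aS: "a j \<le> S" if "j \<in> F" for j
      unfolding S_def using that a F by (intro member_le_sum) auto
    have "(\<Sum>j\<in>F. a j powr p) = (\<Sum>j\<in>F. S powr p * (a j / S) powr p)"
      using S a by (intro sum.cong) (auto simp: powr_divide)
    also have "\<dots> \<le> (\<Sum>j\<in>F. S powr p * (a j / S))"
      using S a aS p powr_mono'[of 1 p]
      by (intro sum_mono mult_left_mono) (auto simp: divide_le_eq_1)
    also have "\<dots> = S powr p * (\<Sum>j\<in>F. a j) / S"
      by (simp add: sum_distrib_left sum_divide_distrib)
    also have "\<dots> = S powr p" using S by (simp add: S_def)
    finally show ?thesis by (simp add: S_def)
  qed
qed

lemma finite_int_abs_bound:
  assumes "finite (F :: int set)"
  obtains M :: nat where "\<And>j. j \<in> F \<Longrightarrow> \<bar>j\<bar> \<le> int M"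
proof
  fix j assume "j \<in> F"
  then have "nat \<bar>j\<bar> \<le> (\<Sum>i\<in>F. nat \<bar>i\<bar>)" using assms by (intro member_le_sum) auto
  then show "\<bar>j\<bar> \<le> int (\<Sum>i\<in>F. nat \<bar>i\<bar>)" by linarith
qed

definition lp_dist :: "real \<Rightarrow> (int \<Rightarrow> 'a::real_normed_vector) \<Rightarrow> (int \<Rightarrow> 'a) \<Rightarrow> real" where
  "lp_dist p x y = lp_norm p (\<lambda>j. x j - y j)"

definition c00 :: "(int \<Rightarrow> 'a::zero) set" where
  "c00 = {x. \<exists>M::nat. \<forall>j. x j \<noteq> 0 \<longrightarrow> \<bar>j\<bar> \<le> int M}"

lemma lp_norm_nonneg: "lp_norm p x \<ge> 0"
  by (simp add: lp_norm_def)

context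
  fixes p :: real
  assumes p: "1 \<le> p"
begin

abbreviation psum :: "(int \<Rightarrow> 'a::real_normed_vector) \<Rightarrow> real" where
  "psum x \<equiv> (\<Sum>\<^sub>\<infinity>j. norm (x j) powr p)"

lemma lp_norm_powr: "lp_norm p x powr p = psum x"
  using p by (simp add: lp_norm_def powr_powr infsum_nonneg)

lemma lp_norm_le: "c \<ge> 0 \<Longrightarrow> psum x \<le> c powr p \<Longrightarrow> lp_norm p x \<le> c"
  using p powr_mono2[of "1/p" "psum x" "c powr p"]
  by (simp add: lp_norm_def infsum_nonneg powr_powr)

lemma norm_le_lp_norm:
  assumes "x \<in> lp p" shows "norm (x j) \<le> lp_norm p x"
proof -
  have "norm (x j) powr p = (\<Sum>\<^sub>\<infinity>i\<in>{j}. norm (x i) powr p)" by simp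
  also have "\<dots> \<le> psum x" using assms by (intro infsum_mono_neutral) (auto simp: lp_def)
  finally have "(norm (x j) powr p) powr (1/p) \<le> lp_norm p x"
    unfolding lp_norm_def using p by (intro powr_mono2) auto
  then show ?thesis using p by (simp add: powr_powr)
qed

lemma lp_finite_support:
  fixes x :: "int \<Rightarrow> 'a::real_normed_vector"
  assumes F: "finite F" and x: "\<And>j. j \<notin> F \<Longrightarrow> x j = 0"
  shows "x \<in> lp p" "lp_norm p x \<le> (\<Sum>j\<in>F. norm (x j))"
proof -
  have "(\<lambda>j. norm (x j) powr p) summable_on UNIV \<longleftrightarrow> (\<lambda>j. norm (x j) powr p) summable_on F"
    by (rule summable_on_cong_neutral) (use x in auto)
  then show "x \<in> lp p" using F by (simp add: lp_def)
  have "psum x = (\<Sum>\<^sub>\<infinity>j\<in>F. norm (x j) powr p)" by (rule infsum_cong_neutral) (use x in auto)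
  also have "\<dots> \<le> (\<Sum>j\<in>F. norm (x j)) powr p"
    using sum_powr_le_powr_sum[OF p F, of "\<lambda>j. norm (x j)"] F by simp
  finally show "lp_norm p x \<le> (\<Sum>j\<in>F. norm (x j))" by (intro lp_norm_le sum_nonneg) auto
qed

lemma lp_norm_le_card_mult:
  fixes x :: "int \<Rightarrow> 'a::real_normed_vector" and c :: real
  assumes "finite F" "\<And>j. j \<notin> F \<Longrightarrow> x j = 0" "\<And>j. norm (x j) \<le> c"
  shows "lp_norm p x \<le> card F * c"
proof -
  have "lp_norm p x \<le> (\<Sum>j\<in>F. norm (x j))" by (rule lp_finite_support(2)) (use assms in auto)
  also have "\<dots> \<le> card F * c" using sum_bounded_above[of F "\<lambda>j. norm (x j)" c] assms(3) by simp
  finally show ?thesis .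
qed

lemma c00_subset_lp: "c00 \<subseteq> lp p"
proof
  fix x :: "int \<Rightarrow> 'a" assume "x \<in> c00"
  then obtain M :: nat where "\<forall>j. x j \<noteq> 0 \<longrightarrow> \<bar>j\<bar> \<le> int M" by (auto simp: c00_def)
  then show "x \<in> lp p" by (intro lp_finite_support(1)[of "{-int M..int M}"]) auto
qed

lemma lp_zero [simp]: "(\<lambda>j. 0) \<in> lp p" "lp_norm p (\<lambda>j. 0) = 0"
  using p by (auto simp: lp_def lp_norm_def)

lemma lp_add:
  fixes x y :: "int \<Rightarrow> 'a::real_normed_vector"
  assumes x: "x \<in> lp p" and y: "y \<in> lp p"
  shows "(\<lambda>j. x j + y j) \<in> lp p" "lp_norm p (\<lambda>j. x j + y j) \<le> lp_norm p x + lp_norm p y"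
proof -
  define a where "a = lp_norm p x"
  define b where "b = lp_norm p y"
  have "(\<lambda>j. x j + y j) \<in> lp p \<and> lp_norm p (\<lambda>j. x j + y j) \<le> a + b"
  proof (cases "a = 0 \<or> b = 0")
    case True
    then have "x = (\<lambda>j. 0) \<or> y = (\<lambda>j. 0)"
      using norm_le_lp_norm[OF x] norm_le_lp_norm[OF y] by (auto simp: a_def b_def fun_eq_iff)
    then show ?thesis using x y by (auto simp: a_def b_def)
  next
    case False
    then have ab: "a > 0" "b > 0" by (auto simp: a_def b_def order_le_neq_trans lp_norm_nonneg)
    have sx: "(\<lambda>j. norm (x j) powr p) summable_on UNIV"
      and sy: "(\<lambda>j. norm (y j) powr p) summable_on UNIV" using x y by (simp_all add: lp_def)
    define cx where "cx = (a + b) powr p * (a / (a + b)) / a powr p"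
    define cy where "cy = (a + b) powr p * (b / (a + b)) / b powr p"
    define g where "g j = cx * norm (x j) powr p + cy * norm (y j) powr p" for j
    have pointwise: "norm (x j + y j) powr p \<le> g j" for j
    proof -
      have "norm (x j + y j) powr p \<le> (norm (x j) + norm (y j)) powr p"
        using p norm_triangle_ineq[of "x j" "y j"] by (intro powr_mono2) auto
      also have "\<dots> \<le> g j"
        using powr_add_le_convex_split[OF p ab, of "norm (x j)" "norm (y j)"]
        by (simp add: g_def cx_def cy_def powr_divide field_simps)
      finally show ?thesis .
    qed
    have sg: "g summable_on UNIV"
      unfolding g_def by (intro summable_on_cmult_right summable_on_add sx sy)
    have s: "(\<lambda>j. norm (x j + y j) powr p) summable_on UNIV"
      by (rule summable_on_comparison_test[OF sg]) (use pointwise in auto)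
    have "psum (\<lambda>j. x j + y j) \<le> (\<Sum>\<^sub>\<infinity>j. g j)"
      by (rule infsum_mono[OF s sg]) (use pointwise in auto)
    also have "\<dots> = cx * psum x + cy * psum y"
      unfolding g_def by (simp add: infsum_cmult_right infsum_add summable_on_cmult_right sx sy)
    also have "\<dots> = (a + b) powr p"
      using ab by (simp add: cx_def cy_def a_def b_def flip: lp_norm_powr distrib_left add_divide_distrib)
    finally show ?thesis using s ab by (simp add: lp_def lp_norm_le)
  qed
  then show "(\<lambda>j. x j + y j) \<in> lp p" "lp_norm p (\<lambda>j. x j + y j) \<le> lp_norm p x + lp_norm p y"
    by (auto simp: a_def b_def)
qed

lemma lp_uminus:
  fixes x :: "int \<Rightarrow> 'a::real_normed_vector"
  shows "(\<lambda>j. - x j) \<in> lp p \<longleftrightarrow> x \<in> lp p" "lp_norm p (\<lambda>j. - x j) = lp_norm p x"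
  by (simp_all add: lp_def lp_norm_def)

lemma lp_diff:
  fixes x y :: "int \<Rightarrow> 'a::real_normed_vector"
  assumes "x \<in> lp p" "y \<in> lp p"
  shows "(\<lambda>j. x j - y j) \<in> lp p"
  using lp_add(1)[OF assms(1) iffD2[OF lp_uminus(1) assms(2)]] by simp

lemma lp_dist_commute: "lp_dist p x y = lp_dist p y x"
  by (simp add: lp_dist_def lp_norm_def norm_minus_commute)

lemma lp_dist_triangle:
  assumes "x \<in> lp p" "y \<in> lp p" "z \<in> lp p"
  shows "lp_dist p x z \<le> lp_dist p x y + lp_dist p y z"
  using lp_add(2)[OF lp_diff[OF assms(1,2)] lp_diff[OF assms(2,3)]] by (simp add: lp_dist_def)

lemma Metric_space_lp: "Metric_space (lp p) (lp_dist p)"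
proof
  show "0 \<le> lp_dist p x y" for x y by (simp add: lp_dist_def lp_norm_nonneg)
  show "lp_dist p x y = lp_dist p y x" for x y by (rule lp_dist_commute)
  show "lp_dist p x y = 0 \<longleftrightarrow> x = y" if "x \<in> lp p" "y \<in> lp p" for x y
    using norm_le_lp_norm[OF lp_diff[OF that]] lp_norm_nonneg
    by (auto simp: lp_dist_def fun_eq_iff)
  show "lp_dist p x z \<le> lp_dist p x y + lp_dist p y z"
    if "x \<in> lp p" "y \<in> lp p" "z \<in> lp p" for x y z
    using lp_dist_triangle[OF that] .
qed


lemma lp_dist_le_pointwise_limit:
  fixes \<sigma> :: "nat \<Rightarrow> int \<Rightarrow> 'a::real_normed_vector"
  assumes lim: "\<And>j. (\<lambda>n. \<sigma> n j) \<longlonglongrightarrow> x j"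
    and close: "\<And>n. n \<ge> N \<Longrightarrow> (\<lambda>j. y j - \<sigma> n j) \<in> lp p \<and> lp_dist p y (\<sigma> n) \<le> c"
    and c: "c \<ge> 0"
  shows "(\<lambda>j. y j - x j) \<in> lp p" "lp_dist p y x \<le> c"
proof -
  have partial: "(\<Sum>j\<in>F. norm (y j - x j) powr p) \<le> c powr p" if F: "finite F" for F
  proof (rule LIMSEQ_le_const2)
    show "(\<lambda>n. \<Sum>j\<in>F. norm (y j - \<sigma> n j) powr p) \<longlonglongrightarrow> (\<Sum>j\<in>F. norm (y j - x j) powr p)"
      using p by (intro tendsto_sum tendsto_powr' tendsto_norm tendsto_diff tendsto_const lim) auto
    have "(\<Sum>j\<in>F. norm (y j - \<sigma> n j) powr p) \<le> c powr p" if n: "n \<ge> N" for n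
    proof -
      have "(\<lambda>j. norm (y j - \<sigma> n j) powr p) summable_on UNIV" using close[OF n] by (simp add: lp_def)
      then have "(\<Sum>\<^sub>\<infinity>j\<in>F. norm (y j - \<sigma> n j) powr p) \<le> psum (\<lambda>j. y j - \<sigma> n j)"
        by (rule infsum_mono_neutral[rotated]) (use F in auto)
      also have "\<dots> = lp_dist p y (\<sigma> n) powr p" by (simp add: lp_dist_def lp_norm_powr)
      also have "\<dots> \<le> c powr p"
        using close[OF n] p by (intro powr_mono2) (auto simp: lp_dist_def lp_norm_nonneg)
      finally show ?thesis using F by simp
    qed
    then show "\<exists>N. \<forall>n\<ge>N. (\<Sum>j\<in>F. norm (y j - \<sigma> n j) powr p) \<le> c powr p" by blast
  qed
  then have s: "(\<lambda>j. norm (y j - x j) powr p) summable_on UNIV"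
    by (intro nonneg_bdd_above_summable_on bdd_aboveI2) auto
  then show "(\<lambda>j. y j - x j) \<in> lp p" by (simp add: lp_def)
  have "psum (\<lambda>j. y j - x j) \<le> c powr p"
    by (rule infsum_le_finite_sums[OF s]) (use partial in auto)
  then show "lp_dist p y x \<le> c" using c by (simp add: lp_dist_def lp_norm_le)
qed

lemma lp_Cauchy_coordinate:
  assumes \<sigma>: "\<And>n. \<sigma> n \<in> lp p"
    and C: "\<And>\<epsilon>. \<epsilon> > 0 \<Longrightarrow> \<exists>N. \<forall>n n'. N \<le> n \<longrightarrow> N \<le> n' \<longrightarrow> lp_dist p (\<sigma> n) (\<sigma> n') < \<epsilon>"
  shows "Cauchy (\<lambda>n. \<sigma> n j)"
proof (rule CauchyI)
  fix e :: real assume "e > 0"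
  then obtain N where N: "\<forall>n n'. N \<le> n \<longrightarrow> N \<le> n' \<longrightarrow> lp_dist p (\<sigma> n) (\<sigma> n') < e"
    using C by blast
  have "norm (\<sigma> m j - \<sigma> n j) < e" if "m \<ge> N" "n \<ge> N" for m n
  proof -
    have "lp_dist p (\<sigma> m) (\<sigma> n) < e" using N that by blast
    then show ?thesis
      using norm_le_lp_norm[OF lp_diff[OF \<sigma>[of m] \<sigma>[of n]], of j] by (simp add: lp_dist_def)
  qed
  then show "\<exists>M. \<forall>m\<ge>M. \<forall>n\<ge>M. norm (\<sigma> m j - \<sigma> n j) < e" by blast
qed

lemma mcomplete_lp:
  "Metric_space.mcomplete (lp p :: (int \<Rightarrow> 'a::banach) set) (lp_dist p)"
proof -
  interpret L: Metric_space "lp p :: (int \<Rightarrow> 'a) set" "lp_dist p" by (rule Metric_space_lp)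
  show ?thesis
    unfolding L.mcomplete_def L.MCauchy_def
  proof (intro allI impI)
    fix \<sigma> :: "nat \<Rightarrow> int \<Rightarrow> 'a"
    assume "range \<sigma> \<subseteq> lp p \<and> (\<forall>\<epsilon>>0. \<exists>N. \<forall>n n'. N \<le> n \<longrightarrow> N \<le> n' \<longrightarrow> lp_dist p (\<sigma> n) (\<sigma> n') < \<epsilon>)"
    then have \<sigma>: "\<And>n. \<sigma> n \<in> lp p"
      and C: "\<And>\<epsilon>. \<epsilon> > 0 \<Longrightarrow> \<exists>N. \<forall>n n'. N \<le> n \<longrightarrow> N \<le> n' \<longrightarrow> lp_dist p (\<sigma> n) (\<sigma> n') < \<epsilon>"
      by auto
    define x where "x j = lim (\<lambda>n. \<sigma> n j)" for j
    have lim: "(\<lambda>n. \<sigma> n j) \<longlonglongrightarrow> x j" for j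
      using lp_Cauchy_coordinate[OF \<sigma> C] unfolding x_def
      by (simp add: Cauchy_convergent_iff convergent_LIMSEQ_iff)
    have close: "\<exists>N. \<forall>n\<ge>N. (\<lambda>j. \<sigma> n j - x j) \<in> lp p \<and> lp_dist p (\<sigma> n) x < \<epsilon>"
      if \<epsilon>: "\<epsilon> > 0" for \<epsilon>
    proof -
      obtain N where N: "\<forall>n n'. N \<le> n \<longrightarrow> N \<le> n' \<longrightarrow> lp_dist p (\<sigma> n) (\<sigma> n') < \<epsilon>/2"
        using C \<epsilon> half_gt_zero by blast
      have half: "(\<lambda>j. \<sigma> n j - x j) \<in> lp p \<and> lp_dist p (\<sigma> n) x \<le> \<epsilon>/2" if n: "n \<ge> N" for n
        using lp_dist_le_pointwise_limit[OF lim, where N = N and y = "\<sigma> n" and c = "\<epsilon>/2"]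
          N n \<epsilon> lp_diff[OF \<sigma> \<sigma>]
        by (simp add: less_imp_le)
      have "(\<lambda>j. \<sigma> n j - x j) \<in> lp p \<and> lp_dist p (\<sigma> n) x < \<epsilon>" if "n \<ge> N" for n
        using half[OF that] \<epsilon> by auto
      then show ?thesis by blast
    qed
    obtain N where "(\<lambda>j. \<sigma> N j - x j) \<in> lp p" using close[of 1] by auto
    then have "(\<lambda>j. \<sigma> N j - (\<sigma> N j - x j)) \<in> lp p" by (rule lp_diff[OF \<sigma>])
    then have "x \<in> lp p" by simp
    moreover have "\<forall>\<epsilon>>0. \<exists>N. \<forall>n\<ge>N. lp_dist p (\<sigma> n) x < \<epsilon>"
      using close by blast
    ultimately have "limitin L.mtopology \<sigma> x sequentially"
      using \<sigma> by (auto simp: L.limitin_metric eventually_sequentially)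
    then show "\<exists>x. limitin L.mtopology \<sigma> x sequentially" by blast
  qed
qed

lemma lp_truncation_approx:
  fixes y :: "int \<Rightarrow> 'a::real_normed_vector"
  assumes y: "y \<in> lp p" and \<epsilon>: "\<epsilon> > 0"
  obtains M :: nat where "lp_dist p y (\<lambda>j. if \<bar>j\<bar> \<le> int M then y j else 0) \<le> \<epsilon>"
proof -
  define g where "g j = norm (y j) powr p" for j
  have g: "g summable_on UNIV" using y by (simp add: lp_def g_def[abs_def])
  obtain F where F: "finite F" "dist (sum g F) (infsum g UNIV) \<le> \<epsilon> powr p"
    using infsum_finite_approximation[OF g, of "\<epsilon> powr p"] \<epsilon> by auto
  obtain M :: nat where M: "\<And>j. j \<in> F \<Longrightarrow> \<bar>j\<bar> \<le> int M"
    using finite_int_abs_bound[OF F(1)] by blast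
  define tail where "tail j = (if j \<in> F then 0 else g j)" for j
  have g0: "g j \<ge> 0" for j by (simp add: g_def)
  have tail: "tail summable_on UNIV"
    by (rule summable_on_comparison_test[OF g]) (auto simp: tail_def g0)
  have "infsum g UNIV = infsum tail UNIV + infsum (\<lambda>j. if j \<in> F then g j else 0) UNIV"
  proof -
    have "(\<lambda>j. if j \<in> F then g j else 0) summable_on UNIV"
      using F(1) by (subst summable_on_cong_neutral[where T=F]) auto
    then show ?thesis
      by (subst infsum_add[OF tail, symmetric]) (auto intro: infsum_cong simp: tail_def)
  qed
  also have "infsum (\<lambda>j. if j \<in> F then g j else 0) UNIV = sum g F"
    using F(1) by (subst infsum_cong_neutral[where T=F]) auto
  finally have "infsum tail UNIV \<le> \<epsilon> powr p" using F(2) by (simp add: dist_real_def)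
  moreover have "psum (\<lambda>j. y j - (if \<bar>j\<bar> \<le> int M then y j else 0)) \<le> infsum tail UNIV"
  proof (rule infsum_mono[OF _ tail])
    show "(\<lambda>j. norm (y j - (if \<bar>j\<bar> \<le> int M then y j else 0)) powr p) summable_on UNIV"
      by (rule summable_on_comparison_test[OF tail]) (use M in \<open>auto simp: tail_def g_def\<close>)
  qed (use M in \<open>auto simp: tail_def g_def\<close>)
  ultimately have "psum (\<lambda>j. y j - (if \<bar>j\<bar> \<le> int M then y j else 0)) \<le> \<epsilon> powr p"
    by linarith
  then have "lp_norm p (\<lambda>j. y j - (if \<bar>j\<bar> \<le> int M then y j else 0)) \<le> \<epsilon>"
    using \<epsilon> by (intro lp_norm_le) auto
  then show ?thesis by (intro that[of M]) (simp add: lp_dist_def)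
qed

lemma lp_separable:
  obtains D :: "(int \<Rightarrow> 'a::real_normed_field) set"
  where "countable D" "D \<subseteq> c00" "\<And>y \<epsilon>. y \<in> lp p \<Longrightarrow> \<epsilon> > 0 \<Longrightarrow> \<exists>d\<in>D. lp_dist p y d < \<epsilon>"
proof -
  obtain Q :: "'a set" where Q: "countable Q" "\<And>x e. e > 0 \<Longrightarrow> \<exists>q\<in>Q. norm (x - q) < e"
    using real_normed_field_countable_dense by blast
  define trunc :: "nat \<Rightarrow> (int \<Rightarrow> 'a) \<Rightarrow> (int \<Rightarrow> 'a)" where
    "trunc M y = (\<lambda>j. if \<bar>j\<bar> \<le> int M then y j else 0)" for M y
  define D where "D = (\<Union>M. trunc M ` Pi\<^sub>E {-int M..int M} (\<lambda>_. Q))"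
  have "countable D" unfolding D_def
    by (intro countable_UN countable_image countable_PiE) (auto simp: Q(1))
  moreover have "D \<subseteq> c00" by (auto simp: D_def c00_def trunc_def)
  moreover have "\<exists>d\<in>D. lp_dist p y d < \<epsilon>" if y: "y \<in> lp p" and \<epsilon>: "\<epsilon> > 0" for y \<epsilon>
  proof -
    obtain M :: nat where M: "lp_dist p y (trunc M y) \<le> \<epsilon>/2"
      using lp_truncation_approx[OF y, of "\<epsilon>/2"] \<epsilon> by (auto simp: trunc_def)
    define \<eta> where "\<eta> = \<epsilon> / (4 * (real M + 1))"
    have \<eta>: "\<eta> > 0" using \<epsilon> by (simp add: \<eta>_def)
    have "\<forall>j. \<exists>q. q \<in> Q \<and> norm (y j - q) < \<eta>" using Q(2)[OF \<eta>] by blast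
    then obtain q where q: "\<And>j. q j \<in> Q \<and> norm (y j - q j) < \<eta>" by metis
    have "trunc M q = trunc M (restrict q {-int M..int M})"
      by (simp add: trunc_def fun_eq_iff abs_le_iff)
    moreover have "restrict q {-int M..int M} \<in> Pi\<^sub>E {-int M..int M} (\<lambda>_. Q)" using q by simp
    ultimately have "trunc M q \<in> D" unfolding D_def by blast
    have fin: "finite {-int M..int M}" by simp
    have "norm (y j - q j) \<le> \<eta>" for j using q[of j] by simp
    then have "lp_dist p (trunc M y) (trunc M q) \<le> card {-int M..int M} * \<eta>"
      unfolding lp_dist_def using \<eta> by (intro lp_norm_le_card_mult[OF fin]) (auto simp: trunc_def)
    also have "\<dots> < \<epsilon>/2" using \<epsilon> by (simp add: \<eta>_def field_simps)
    finally have "lp_dist p (trunc M y) (trunc M q) < \<epsilon>/2" .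
    moreover have "trunc M y \<in> lp p" "trunc M q \<in> lp p"
      using c00_subset_lp unfolding c00_def trunc_def by force+
    ultimately have "lp_dist p y (trunc M q) < \<epsilon>"
      using lp_dist_triangle[OF y, of "trunc M y" "trunc M q"] M by linarith
    then show ?thesis using \<open>trunc M q \<in> D\<close> by blast
  qed
  ultimately show ?thesis using that by blast
qed

end

section \<open>Bounded linear operators on \<open>\<ell>\<^sup>p(\<int>)\<close>\<close>

lemma bounded_linear_lpD:
  assumes "bounded_linear_lp p T"
  shows bounded_linear_lp_in_lp: "x \<in> lp p \<Longrightarrow> T x \<in> lp p"
    and bounded_linear_lp_add: "x \<in> lp p \<Longrightarrow> y \<in> lp p \<Longrightarrow> T (\<lambda>j. x j + y j) = (\<lambda>j. T x j + T y j)"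
    and bounded_linear_lp_scale: "x \<in> lp p \<Longrightarrow> T (\<lambda>j. c * x j) = (\<lambda>j. c * T x j)"
    and bounded_linear_lp_bound: "\<exists>C. \<forall>x\<in>lp p. lp_norm p (T x) \<le> C * lp_norm p x"
  using assms unfolding bounded_linear_lp_def by simp_all

lemma bounded_linear_lp_id: "bounded_linear_lp p (\<lambda>x. x)"
  unfolding bounded_linear_lp_def by (auto intro: exI[of _ 1])

lemma bounded_linear_lp_comp:
  assumes T: "bounded_linear_lp p T" and S: "bounded_linear_lp p S"
  shows "bounded_linear_lp p (\<lambda>x. T (S x))"
proof -
  obtain CT where CT: "\<And>x. x \<in> lp p \<Longrightarrow> lp_norm p (T x) \<le> CT * lp_norm p x"
    using bounded_linear_lp_bound[OF T] by blast
  obtain CS where CS: "\<And>x. x \<in> lp p \<Longrightarrow> lp_norm p (S x) \<le> CS * lp_norm p x"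
    using bounded_linear_lp_bound[OF S] by blast
  have "lp_norm p (T (S x)) \<le> (max CT 0 * CS) * lp_norm p x" if x: "x \<in> lp p" for x
  proof -
    have Sx: "S x \<in> lp p" by (rule bounded_linear_lp_in_lp[OF S x])
    have "lp_norm p (T (S x)) \<le> max CT 0 * lp_norm p (S x)"
      using CT[OF Sx] lp_norm_nonneg[of p "S x"] by (smt (verit) mult_right_mono)
    also have "\<dots> \<le> max CT 0 * (CS * lp_norm p x)" by (intro mult_left_mono CS x) simp
    finally show ?thesis by (simp add: mult.assoc)
  qed
  then show ?thesis
    unfolding bounded_linear_lp_def
    by (auto simp: bounded_linear_lp_in_lp[OF T] bounded_linear_lp_in_lp[OF S]
        bounded_linear_lp_add[OF T] bounded_linear_lp_add[OF S]
        bounded_linear_lp_scale[OF T] bounded_linear_lp_scale[OF S])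
qed

lemma bounded_linear_lp_funpow:
  assumes "bounded_linear_lp p T"
  shows "bounded_linear_lp p (T ^^ m)"
proof (induction m)
  case 0 then show ?case by (simp add: bounded_linear_lp_id)
next
  case (Suc m) then show ?case using bounded_linear_lp_comp[OF assms] by (simp add: o_def)
qed

context
  fixes p :: real
  assumes p: "1 \<le> p"
begin

lemma bounded_linear_lp_diff:
  assumes T: "bounded_linear_lp p T" and x: "x \<in> lp p" and y: "y \<in> lp p"
  shows "T (\<lambda>j. x j - y j) = (\<lambda>j. T x j - T y j)"
proof -
  have "(\<lambda>j. - y j) \<in> lp p" using lp_uminus(1)[OF p, of y] y by simp
  then have "T (\<lambda>j. x j + - y j) = (\<lambda>j. T x j + T (\<lambda>j. - y j) j)"
    by (rule bounded_linear_lp_add[OF T x])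
  moreover have "T (\<lambda>j. - y j) = (\<lambda>j. - T y j)" using bounded_linear_lp_scale[OF T y, of "-1"] by simp
  ultimately show ?thesis by simp
qed

lemma bounded_linear_lp_lipschitz:
  fixes T :: "(int \<Rightarrow> 'a::real_normed_field) \<Rightarrow> (int \<Rightarrow> 'a)"
  assumes T: "bounded_linear_lp p T"
  obtains C where "C > 0" "\<And>x y. x \<in> lp p \<Longrightarrow> y \<in> lp p \<Longrightarrow> lp_dist p (T x) (T y) \<le> C * lp_dist p x y"
proof -
  obtain C where C: "\<And>x. x \<in> lp p \<Longrightarrow> lp_norm p (T x) \<le> C * lp_norm p x"
    using bounded_linear_lp_bound[OF T] by blast
  have "lp_dist p (T x) (T y) \<le> (max C 0 + 1) * lp_dist p x y" if "x \<in> lp p" "y \<in> lp p" for x y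
    using C[OF lp_diff[OF p that]] lp_norm_nonneg[of p "\<lambda>j. x j - y j"]
    by (simp add: lp_dist_def bounded_linear_lp_diff[OF T that, symmetric])
       (smt (verit) mult_right_mono)
  then show ?thesis using that[of "max C 0 + 1"] by simp
qed

end

section \<open>The Disjoint Blow-up/Collapse Criterion implies disjoint hypercyclicity\<close>

definition joint_orbit_hits ::
  "real \<Rightarrow> nat \<Rightarrow> (nat \<Rightarrow> (int \<Rightarrow> 'a::real_normed_field) \<Rightarrow> (int \<Rightarrow> 'a)) \<Rightarrow> (nat \<Rightarrow> int \<Rightarrow> 'a) \<Rightarrow> real \<Rightarrow> (int \<Rightarrow> 'a) set"
  where "joint_orbit_hits p N T t r = {x \<in> lp p. \<exists>m. \<forall>i\<in>{1..N}. lp_dist p ((T i ^^ m) x) (t i) < r}"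

context
  fixes p :: real
  assumes p: "1 \<le> p"
begin

lemma bounded_linear_lp_dist_less_stable:
  assumes S: "bounded_linear_lp p S" and x: "x \<in> lp p" and t: "t \<in> lp p"
    and less: "lp_dist p (S x) t < r"
  obtains \<rho> where "\<rho> > 0" "\<And>y. y \<in> lp p \<Longrightarrow> lp_dist p x y < \<rho> \<Longrightarrow> lp_dist p (S y) t < r"
proof -
  obtain C where C: "C > 0"
    "\<And>x y. x \<in> lp p \<Longrightarrow> y \<in> lp p \<Longrightarrow> lp_dist p (S x) (S y) \<le> C * lp_dist p x y"
    using bounded_linear_lp_lipschitz[OF p S] by blast
  define \<rho> where "\<rho> = (r - lp_dist p (S x) t) / C"
  have "lp_dist p (S y) t < r" if y: "y \<in> lp p" "lp_dist p x y < \<rho>" for y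
  proof -
    have "lp_dist p (S y) t \<le> lp_dist p (S y) (S x) + lp_dist p (S x) t"
      using bounded_linear_lp_in_lp[OF S] x y t by (intro lp_dist_triangle[OF p]) auto
    also have "lp_dist p (S y) (S x) \<le> C * lp_dist p x y"
      using C(2)[OF y(1) x] by (simp add: lp_dist_commute[OF p, of y])
    also have "C * lp_dist p x y < r - lp_dist p (S x) t"
      using y(2) C(1) by (simp add: \<rho>_def field_simps)
    finally show ?thesis by simp
  qed
  moreover have "\<rho> > 0" using less C(1) by (simp add: \<rho>_def)
  ultimately show ?thesis using that by blast
qed

lemma openin_joint_orbit_hits:
  assumes T: "\<And>i. i \<in> {1..N} \<Longrightarrow> bounded_linear_lp p (T i)"
    and t: "\<And>i. i \<in> {1..N} \<Longrightarrow> t i \<in> lp p"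
  shows "openin (Metric_space.mtopology (lp p) (lp_dist p)) (joint_orbit_hits p N T t r)"
proof -
  interpret L: Metric_space "lp p" "lp_dist p" by (rule Metric_space_lp[OF p])
  have "\<exists>\<rho>>0. L.mball x \<rho> \<subseteq> joint_orbit_hits p N T t r"
    if "x \<in> joint_orbit_hits p N T t r" for x
  proof -
    obtain m where x: "x \<in> lp p" and m: "\<And>i. i \<in> {1..N} \<Longrightarrow> lp_dist p ((T i ^^ m) x) (t i) < r"
      using \<open>x \<in> joint_orbit_hits p N T t r\<close> unfolding joint_orbit_hits_def by blast
    have "\<forall>i\<in>{1..N}. \<exists>\<rho>>0. \<forall>y\<in>lp p. lp_dist p x y < \<rho> \<longrightarrow> lp_dist p ((T i ^^ m) y) (t i) < r"
    proof
      fix i assume i: "i \<in> {1..N}"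
      obtain \<rho> where "\<rho> > 0" "\<And>y. y \<in> lp p \<Longrightarrow> lp_dist p x y < \<rho> \<Longrightarrow> lp_dist p ((T i ^^ m) y) (t i) < r"
        using bounded_linear_lp_dist_less_stable[OF bounded_linear_lp_funpow[OF T[OF i]] x t[OF i] m[OF i]]
        by blast
      then show "\<exists>\<rho>>0. \<forall>y\<in>lp p. lp_dist p x y < \<rho> \<longrightarrow> lp_dist p ((T i ^^ m) y) (t i) < r" by blast
    qed
    then obtain \<rho> where \<rho>: "\<And>i. i \<in> {1..N} \<Longrightarrow> \<rho> i > 0 \<and>
        (\<forall>y\<in>lp p. lp_dist p x y < \<rho> i \<longrightarrow> lp_dist p ((T i ^^ m) y) (t i) < r)"
      by metis
    define \<rho>0 where "\<rho>0 = Min (insert 1 (\<rho> ` {1..N}))"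
    have "\<rho>0 > 0" using \<rho> by (simp add: \<rho>0_def)
    moreover have "L.mball x \<rho>0 \<subseteq> joint_orbit_hits p N T t r"
      using \<rho> by (auto simp: joint_orbit_hits_def \<rho>0_def intro!: exI[of _ m])
    ultimately show ?thesis by blast
  qed
  then show ?thesis
    by (auto simp: L.openin_mtopology joint_orbit_hits_def)
qed

lemma dBC_criterionE:
  fixes T :: "nat \<Rightarrow> (int \<Rightarrow> 'a::real_normed_field) \<Rightarrow> (int \<Rightarrow> 'a)"
  assumes "dBC_criterion p N T"
  obtains X0 S nk where
    "\<And>i. i \<in> {1..N} \<Longrightarrow> bounded_linear_lp p (T i)"
    "X0 \<subseteq> lp p" "\<And>y \<epsilon>. y \<in> lp p \<Longrightarrow> \<epsilon> > 0 \<Longrightarrow> \<exists>x\<in>X0. lp_dist p x y < \<epsilon>"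
    "\<And>k xs. \<forall>i\<in>{1..N}. xs i \<in> X0 \<Longrightarrow> S k xs \<in> lp p"
    "\<And>x i. x \<in> X0 \<Longrightarrow> i \<in> {1..N} \<Longrightarrow> (\<lambda>k. lp_norm p ((T i ^^ nk k) x)) \<longlonglongrightarrow> 0"
    "\<And>\<epsilon> K xs. \<epsilon> > 0 \<Longrightarrow> \<forall>i\<in>{1..N}. xs i \<in> X0 \<Longrightarrow> \<exists>k\<ge>K. lp_norm p (S k xs) < \<epsilon> \<and>
       (\<forall>i\<in>{1..N}. lp_dist p ((T i ^^ nk k) (S k xs)) (xs i) < \<epsilon>)"
proof -
  from assms obtain nk X0 and S :: "nat \<Rightarrow> (nat \<Rightarrow> int \<Rightarrow> 'a) \<Rightarrow> (int \<Rightarrow> 'a)" where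
    T: "\<forall>i\<in>{1..N}. bounded_linear_lp p (T i)" and
    X0: "X0 \<subseteq> lp p" "\<forall>y\<in>lp p. \<forall>\<epsilon>>0. \<exists>x\<in>X0. lp_norm p (\<lambda>j. x j - y j) < \<epsilon>" and
    S: "\<forall>k xs. (\<forall>i\<in>{1..N}. xs i \<in> X0) \<longrightarrow> S k xs \<in> lp p" and
    collapse: "\<forall>x\<in>X0. \<forall>i\<in>{1..N}. (\<lambda>k. lp_norm p ((T i ^^ nk k) x)) \<longlonglongrightarrow> 0" and
    blow_up: "\<forall>\<epsilon>>0. \<forall>K::nat. \<forall>xs. (\<forall>i\<in>{1..N}. xs i \<in> X0) \<longrightarrow>
      (\<exists>k\<ge>K. lp_norm p (S k xs) < \<epsilon> \<and>
        (\<forall>i\<in>{1..N}. lp_norm p (\<lambda>j. (T i ^^ nk k) (S k xs) j - xs i j) < \<epsilon>))"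
    unfolding dBC_criterion_def by blast
  show ?thesis
  proof (rule that[of X0 S nk])
    show "bounded_linear_lp p (T i)" if "i \<in> {1..N}" for i using T that by blast
    show "X0 \<subseteq> lp p" by (fact X0(1))
    show "\<exists>x\<in>X0. lp_dist p x y < \<epsilon>" if "y \<in> lp p" "\<epsilon> > 0" for y \<epsilon>
      using X0(2) that unfolding lp_dist_def by blast
    show "S k xs \<in> lp p" if "\<forall>i\<in>{1..N}. xs i \<in> X0" for k xs using S that by blast
    show "(\<lambda>k. lp_norm p ((T i ^^ nk k) x)) \<longlonglongrightarrow> 0" if "x \<in> X0" "i \<in> {1..N}" for x i
      using collapse that by blast
    show "\<exists>k\<ge>K. lp_norm p (S k xs) < \<epsilon> \<and> (\<forall>i\<in>{1..N}. lp_dist p ((T i ^^ nk k) (S k xs)) (xs i) < \<epsilon>)"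
      if "\<epsilon> > 0" "\<forall>i\<in>{1..N}. xs i \<in> X0" for \<epsilon> K xs
      using blow_up that unfolding lp_dist_def by blast
  qed
qed

lemma lp_dist_bounded_linear_add_le:
  assumes S: "bounded_linear_lp p S" and lp: "x \<in> lp p" "z \<in> lp p" "u \<in> lp p" "t \<in> lp p"
  shows "lp_dist p (S (\<lambda>j. x j + z j)) t \<le> lp_norm p (S x) + lp_dist p (S z) u + lp_dist p u t"
proof -
  have Sxz: "S (\<lambda>j. x j + z j) = (\<lambda>j. S x j + S z j)" by (rule bounded_linear_lp_add[OF S lp(1,2)])
  have "S (\<lambda>j. x j + z j) \<in> lp p" "S z \<in> lp p"
    using bounded_linear_lp_in_lp[OF S] lp_add(1)[OF p lp(1,2)] lp(2) by auto
  then have "lp_dist p (S (\<lambda>j. x j + z j)) t \<le> lp_dist p (S (\<lambda>j. x j + z j)) (S z) + lp_dist p (S z) t"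
    "lp_dist p (S z) t \<le> lp_dist p (S z) u + lp_dist p u t"
    using lp_dist_triangle[OF p _ _ lp(4)] lp_dist_triangle[OF p _ lp(3,4)] by blast+
  then have "lp_dist p (S (\<lambda>j. x j + z j)) t \<le>
      lp_dist p (S (\<lambda>j. x j + z j)) (S z) + (lp_dist p (S z) u + lp_dist p u t)"
    by linarith
  also have "lp_dist p (S (\<lambda>j. x j + z j)) (S z) = lp_norm p (S x)" by (simp add: Sxz lp_dist_def)
  finally show ?thesis by simp
qed

text \<open>The density step: \<open>y = x\<^sub>0 + S\<^sub>k(x\<^sub>1,\<dots>,x\<^sub>N)\<close> with \<open>x\<^sub>0 \<approx> x\<close> and \<open>x\<^sub>i \<approx> t\<^sub>i\<close> in \<open>X\<^sub>0\<close> is close to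
  \<open>x\<close>, and \<open>(T i ^^ nk k) y\<close> is close to \<open>t\<^sub>i\<close> for all \<open>i\<close> at once.\<close>

lemma joint_orbit_hits_dense:
  fixes T :: "nat \<Rightarrow> (int \<Rightarrow> 'a::real_normed_field) \<Rightarrow> (int \<Rightarrow> 'a)"
  assumes T: "\<And>i. i \<in> {1..N} \<Longrightarrow> bounded_linear_lp p (T i)"
    and X0: "X0 \<subseteq> lp p" "\<And>y \<epsilon>. y \<in> lp p \<Longrightarrow> \<epsilon> > 0 \<Longrightarrow> \<exists>x\<in>X0. lp_dist p x y < \<epsilon>"
    and S: "\<And>k xs. \<forall>i\<in>{1..N}. xs i \<in> X0 \<Longrightarrow> S k xs \<in> lp p"
    and collapse: "\<And>x i. x \<in> X0 \<Longrightarrow> i \<in> {1..N} \<Longrightarrow> (\<lambda>k. lp_norm p ((T i ^^ nk k) x)) \<longlonglongrightarrow> 0"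
    and blow_up: "\<And>\<epsilon> K xs. \<epsilon> > 0 \<Longrightarrow> \<forall>i\<in>{1..N}. xs i \<in> X0 \<Longrightarrow> \<exists>k\<ge>K. lp_norm p (S k xs) < \<epsilon> \<and>
       (\<forall>i\<in>{1..N}. lp_dist p ((T i ^^ nk k) (S k xs)) (xs i) < \<epsilon>)"
    and t: "\<And>i. i \<in> {1..N} \<Longrightarrow> t i \<in> lp p" and r: "r > 0"
  shows "Metric_space.mtopology (lp p) (lp_dist p) closure_of joint_orbit_hits p N T t r = lp p"
proof -
  interpret L: Metric_space "lp p" "lp_dist p" by (rule Metric_space_lp[OF p])
  have "\<exists>y\<in>joint_orbit_hits p N T t r. y \<in> L.mball x \<rho>" if x: "x \<in> lp p" and \<rho>: "\<rho> > 0" for x \<rho>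
  proof -
    define \<eta> where "\<eta> = min (\<rho>/2) (r/3)"
    have \<eta>: "\<eta> > 0" using \<rho> r by (simp add: \<eta>_def)
    obtain x0 where x0: "x0 \<in> X0" "lp_dist p x0 x < \<rho>/2" using X0(2)[OF x, of "\<rho>/2"] \<rho> by auto
    have "\<forall>i\<in>{1..N}. \<exists>z\<in>X0. lp_dist p z (t i) < \<eta>" using X0(2)[OF t \<eta>] by blast
    then obtain xs where xs: "\<And>i. i \<in> {1..N} \<Longrightarrow> xs i \<in> X0 \<and> lp_dist p (xs i) (t i) < \<eta>"
      by metis
    have "eventually (\<lambda>k. \<forall>i\<in>{1..N}. lp_norm p ((T i ^^ nk k) x0) < \<eta>) sequentially"
      using collapse[OF x0(1)] \<eta> by (intro eventually_ball_finite ballI order_tendstoD(2)) auto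
    then obtain K where K: "\<forall>k\<ge>K. \<forall>i\<in>{1..N}. lp_norm p ((T i ^^ nk k) x0) < \<eta>"
      unfolding eventually_sequentially ..
    have "\<forall>i\<in>{1..N}. xs i \<in> X0" using xs by blast
    then obtain k where k: "k \<ge> K" "lp_norm p (S k xs) < \<eta>"
      "\<forall>i\<in>{1..N}. lp_dist p ((T i ^^ nk k) (S k xs)) (xs i) < \<eta>"
      using blow_up[OF \<eta>] by blast
    have x0_lp: "x0 \<in> lp p" and S_lp: "S k xs \<in> lp p" using x0 X0(1) S xs by auto
    define y where "y = (\<lambda>j. x0 j + S k xs j)"
    have y: "y \<in> lp p" unfolding y_def by (rule lp_add(1)[OF p x0_lp S_lp])
    have "lp_dist p x y \<le> lp_dist p x x0 + lp_dist p x0 y"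
      using x x0_lp y by (rule lp_dist_triangle[OF p])
    also have "lp_dist p x0 y = lp_norm p (S k xs)"
      using lp_uminus(2)[OF p, of "S k xs"] by (simp add: lp_dist_def y_def)
    finally have "lp_dist p x y < \<rho>"
      using x0(2) k(2) lp_dist_commute[OF p, of x x0] by (simp add: \<eta>_def)
    moreover have "lp_dist p ((T i ^^ nk k) y) (t i) < r" if i: "i \<in> {1..N}" for i
    proof -
      have "lp_dist p ((T i ^^ nk k) y) (t i) \<le> lp_norm p ((T i ^^ nk k) x0) +
          lp_dist p ((T i ^^ nk k) (S k xs)) (xs i) + lp_dist p (xs i) (t i)"
        unfolding y_def using xs[OF i] X0(1) x0_lp S_lp t[OF i]
        by (intro lp_dist_bounded_linear_add_le bounded_linear_lp_funpow T i) auto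
      moreover have "lp_norm p ((T i ^^ nk k) x0) < \<eta>"
        "lp_dist p ((T i ^^ nk k) (S k xs)) (xs i) < \<eta>" using K k i by blast+
      ultimately show ?thesis using xs[OF i] by (simp add: \<eta>_def)
    qed
    ultimately have "y \<in> joint_orbit_hits p N T t r" "y \<in> L.mball x \<rho>"
      using x y unfolding joint_orbit_hits_def by (auto intro!: exI[of _ "nk k"])
    then show ?thesis by blast
  qed
  then show ?thesis unfolding L.metric_closure_of by blast
qed

lemma disjoint_hypercyclic_if_joint_orbit_hits:
  assumes T: "\<And>i. i \<in> {1..N} \<Longrightarrow> bounded_linear_lp p (T i)"
    and D: "D \<subseteq> lp p" "\<And>y \<epsilon>. y \<in> lp p \<Longrightarrow> \<epsilon> > 0 \<Longrightarrow> \<exists>d\<in>D. lp_dist p y d < \<epsilon>"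
    and x: "x \<in> lp p" "\<And>t r. t \<in> Pi\<^sub>E {1..N} (\<lambda>_. D) \<Longrightarrow> x \<in> joint_orbit_hits p N T t (1 / Suc r)"
  shows "disjoint_hypercyclic p N T"
  unfolding disjoint_hypercyclic_def
proof (intro bexI[OF _ x(1)] allI impI)
  fix y :: "nat \<Rightarrow> int \<Rightarrow> 'a" and \<epsilon> :: real
  assume y: "\<forall>i\<in>{1..N}. y i \<in> lp p" and \<epsilon>: "\<epsilon> > 0"
  have "\<exists>d\<in>D. lp_dist p (y i) d < \<epsilon>/2" if "i \<in> {1..N}" for i
    using D(2)[of "y i" "\<epsilon>/2"] y that \<epsilon> by simp
  then obtain t where t: "\<And>i. i \<in> {1..N} \<Longrightarrow> t i \<in> D \<and> lp_dist p (y i) (t i) < \<epsilon>/2"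
    by metis
  obtain r :: nat where r: "1 / Suc r < \<epsilon>/2"
    using reals_Archimedean[of "\<epsilon>/2"] \<epsilon> by (auto simp: inverse_eq_divide)
  have "restrict t {1..N} \<in> Pi\<^sub>E {1..N} (\<lambda>_. D)" using t by auto
  then have "x \<in> joint_orbit_hits p N T (restrict t {1..N}) (1 / Suc r)" by (rule x(2))
  then obtain m where m: "\<forall>i\<in>{1..N}. lp_dist p ((T i ^^ m) x) (t i) < 1 / Suc r"
    unfolding joint_orbit_hits_def by auto
  have "lp_dist p ((T i ^^ m) x) (y i) < \<epsilon>" if i: "i \<in> {1..N}" for i
  proof -
    have "lp_dist p ((T i ^^ m) x) (y i) \<le> lp_dist p ((T i ^^ m) x) (t i) + lp_dist p (t i) (y i)"
      using bounded_linear_lp_in_lp[OF bounded_linear_lp_funpow[OF T[OF i]] x(1)] t[OF i] D(1) y i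
      by (intro lp_dist_triangle[OF p]) auto
    moreover have "lp_dist p ((T i ^^ m) x) (t i) < 1 / Suc r" using m i by blast
    ultimately show ?thesis using t[OF i] r lp_dist_commute[OF p, of "t i" "y i"] by linarith
  qed
  then show "\<exists>m. \<forall>i\<in>{1..N}. lp_norm p (\<lambda>j. (T i ^^ m) x j - y i j) < \<epsilon>"
    unfolding lp_dist_def by blast
qed

text \<open>Baire: the sets of points whose joint orbit comes \<open>1/(r+1)\<close>-close to a tuple from a countable
  dense set are open and dense, so they have a common point.\<close>

theorem dBC_criterion_imp_disjoint_hypercyclic:
  fixes T :: "nat \<Rightarrow> (int \<Rightarrow> 'a::{real_normed_field,banach}) \<Rightarrow> (int \<Rightarrow> 'a)"
  assumes crit: "dBC_criterion p N T"
  shows "disjoint_hypercyclic p N T"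
proof -
  interpret L: Metric_space "lp p :: (int \<Rightarrow> 'a) set" "lp_dist p" by (rule Metric_space_lp[OF p])
  obtain X0 S nk where T: "\<And>i. i \<in> {1..N} \<Longrightarrow> bounded_linear_lp p (T i)"
    and crit_facts: "X0 \<subseteq> lp p" "\<And>y \<epsilon>. y \<in> lp p \<Longrightarrow> \<epsilon> > 0 \<Longrightarrow> \<exists>x\<in>X0. lp_dist p x y < \<epsilon>"
      "\<And>k xs. \<forall>i\<in>{1..N}. xs i \<in> X0 \<Longrightarrow> S k xs \<in> lp p"
      "\<And>x i. x \<in> X0 \<Longrightarrow> i \<in> {1..N} \<Longrightarrow> (\<lambda>k. lp_norm p ((T i ^^ nk k) x)) \<longlonglongrightarrow> 0"
      "\<And>\<epsilon> K xs. \<epsilon> > 0 \<Longrightarrow> \<forall>i\<in>{1..N}. xs i \<in> X0 \<Longrightarrow> \<exists>k\<ge>K. lp_norm p (S k xs) < \<epsilon> \<and>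
         (\<forall>i\<in>{1..N}. lp_dist p ((T i ^^ nk k) (S k xs)) (xs i) < \<epsilon>)"
    by (fact dBC_criterionE[OF crit])
  obtain D :: "(int \<Rightarrow> 'a) set" where D: "countable D" "D \<subseteq> c00"
    "\<And>y \<epsilon>. y \<in> lp p \<Longrightarrow> \<epsilon> > 0 \<Longrightarrow> \<exists>d\<in>D. lp_dist p y d < \<epsilon>"
    using lp_separable[OF p] by blast
  have D_lp: "D \<subseteq> lp p" using D(2) c00_subset_lp[OF p] by blast
  define \<G> where "\<G> = (\<lambda>(t, r). joint_orbit_hits p N T t (1 / Suc r)) ` (Pi\<^sub>E {1..N} (\<lambda>_. D) \<times> UNIV)"
  have "L.mtopology closure_of \<Inter>\<G> = lp p"
  proof (rule L.metric_Baire_category[OF mcomplete_lp[OF p]])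
    show "countable \<G>" unfolding \<G>_def
      by (intro countable_image countable_SIGMA countable_PiE) (auto simp: D(1))
    fix U assume "U \<in> \<G>"
    then obtain t r where t: "t \<in> Pi\<^sub>E {1..N} (\<lambda>_. D)" and U: "U = joint_orbit_hits p N T t (1 / Suc r)"
      by (auto simp: \<G>_def)
    have t_lp: "\<And>i. i \<in> {1..N} \<Longrightarrow> t i \<in> lp p" using t D_lp by auto
    show "openin L.mtopology U \<and> L.mtopology closure_of U = lp p"
      unfolding U
    proof
      show "openin L.mtopology (joint_orbit_hits p N T t (1 / Suc r))"
        by (rule openin_joint_orbit_hits[OF T t_lp])
      have r_pos: "(0::real) < 1 / Suc r" by simp
      show "L.mtopology closure_of joint_orbit_hits p N T t (1 / Suc r) = lp p"
        using joint_orbit_hits_dense[OF T crit_facts t_lp r_pos] by simp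
    qed
  qed
  moreover have "lp p \<noteq> {}" using lp_zero(1)[OF p] by blast
  ultimately have "lp p \<inter> \<Inter>\<G> \<noteq> {}"
    using closure_of_restrict[of L.mtopology "\<Inter>\<G>"] by (auto simp: L.topspace_mtopology)
  then obtain x where x: "x \<in> lp p" "x \<in> \<Inter>\<G>" by blast
  have hits: "x \<in> joint_orbit_hits p N T t (1 / Suc r)" if "t \<in> Pi\<^sub>E {1..N} (\<lambda>_. D)" for t r
    using x(2) that unfolding \<G>_def by blast
  show ?thesis by (rule disjoint_hypercyclic_if_joint_orbit_hits[OF T D_lp D(3) x(1) hits])
qed

end

section \<open>Weighted pseudo-shifts\<close>

lemma inv_funpow_funpow:
  fixes f :: "'a \<Rightarrow> 'a"
  assumes "bij f" shows "(inv f ^^ n) ((f ^^ n) x) = x"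
  using inv_fn_o_fn_is_id[OF assms, of n] by (metis comp_apply)

lemma funpow_inv_funpow:
  fixes f :: "'a \<Rightarrow> 'a"
  assumes "bij f" shows "(f ^^ n) ((inv f ^^ n) x) = x"
  using fn_o_inv_fn_is_id[OF assms, of n] by (metis comp_apply)

lemma Wpos_Suc: "Wpos f w j (Suc n) = Wpos f w j n * w ((f ^^ Suc n) j)"
  by (simp add: Wpos_def)

lemma Wneg_Suc: "Wneg f w m (Suc n) = w m * Wneg f w (inv f m) n"
  unfolding Wneg_def
  by (subst prod.atLeast0_lessThan_Suc_shift) (simp add: funpow_Suc_right del: funpow.simps)

lemma Wpos_nonzero: "(\<And>m. w m \<noteq> 0) \<Longrightarrow> Wpos f w j n \<noteq> 0"
  by (simp add: Wpos_def)

lemma Wpos_inv_funpow: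
  assumes f: "bij f"
  shows "Wpos f w ((inv f ^^ n) m) n = Wneg f w m n"
proof (induction n arbitrary: m)
  case 0 then show ?case by (simp add: Wpos_def Wneg_def)
next
  case (Suc n)
  have "(inv f ^^ Suc n) m = (inv f ^^ n) (inv f m)" by (simp add: funpow_Suc_right del: funpow.simps)
  moreover have "(f ^^ Suc n) ((inv f ^^ n) (inv f m)) = m"
    using funpow_inv_funpow[OF f] f by (simp add: bij_def surj_f_inv_f)
  ultimately show ?case by (simp add: Wpos_Suc Suc.IH Wneg_Suc mult.commute)
qed

lemma pseudo_shift_funpow:
  "(pseudo_shift f w ^^ n) x = (\<lambda>j. Wpos f w j n * x ((f ^^ n) j))"
proof (induction n arbitrary: x)
  case 0 then show ?case by (simp add: Wpos_def)
next
  case (Suc n)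
  have "(pseudo_shift f w ^^ Suc n) x = (pseudo_shift f w ^^ n) (pseudo_shift f w x)"
    by (simp add: funpow_Suc_right del: funpow.simps)
  also have "\<dots> = (\<lambda>j. Wpos f w j (Suc n) * x ((f ^^ Suc n) j))"
    by (simp add: Suc.IH pseudo_shift_def Wpos_Suc mult.assoc)
  finally show ?case .
qed

lemma pseudo_shift_bounded_linear:
  fixes f :: "int \<Rightarrow> int" and w :: "int \<Rightarrow> 'a::real_normed_field"
  assumes p: "1 \<le> p" and f: "bij f" and B: "\<And>m. norm (w m) \<le> B"
  shows "bounded_linear_lp p (pseudo_shift f w)"
proof -
  have B0: "B \<ge> 0" using B[of 0] norm_ge_zero[of "w 0"] by linarith
  have shift: "pseudo_shift f w x \<in> lp p \<and> lp_norm p (pseudo_shift f w x) \<le> B * lp_norm p x"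
    if x: "x \<in> lp p" for x
  proof -
    have bf: "bij_betw f UNIV UNIV" using f by (simp add: bij_def bij_betw_def)
    have sx: "(\<lambda>j. norm (x j) powr p) summable_on UNIV" using x by (simp add: lp_def)
    then have sxf: "(\<lambda>j. norm (x (f j)) powr p) summable_on UNIV"
      using summable_on_reindex_bij_betw[OF bf, of "\<lambda>j. norm (x j) powr p"] by simp
    have pointwise: "norm (pseudo_shift f w x j) powr p \<le> B powr p * norm (x (f j)) powr p" for j
      unfolding pseudo_shift_def norm_mult powr_mult
      using p B by (intro mult_right_mono powr_mono2) auto
    have s2: "(\<lambda>j. B powr p * norm (x (f j)) powr p) summable_on UNIV"
      by (intro summable_on_cmult_right sxf)
    have s: "(\<lambda>j. norm (pseudo_shift f w x j) powr p) summable_on UNIV"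
      by (rule summable_on_comparison_test[OF s2]) (use pointwise in auto)
    have "psum p (pseudo_shift f w x) \<le> (\<Sum>\<^sub>\<infinity>j. B powr p * norm (x (f j)) powr p)"
      by (rule infsum_mono[OF s s2]) (use pointwise in auto)
    also have "\<dots> = B powr p * psum p x"
      using infsum_reindex_bij_betw[OF bf, of "\<lambda>j. norm (x j) powr p"]
      by (simp add: infsum_cmult_right sxf)
    also have "\<dots> = (B * lp_norm p x) powr p"
      using B0 by (simp add: powr_mult lp_norm_powr[OF p] lp_norm_nonneg)
    finally show ?thesis
      using s B0 by (simp add: lp_def lp_norm_le[OF p] lp_norm_nonneg)
  qed
  show ?thesis
    unfolding bounded_linear_lp_def
    using shift by (auto simp: pseudo_shift_def algebra_simps)
qed

section \<open>The criterion for families of pseudo-shifts\<close>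

lemma norm_mult_diff_le:
  fixes w x a y :: "'a::real_normed_field"
  assumes x: "x \<noteq> 0" and w: "norm (w - a / x) < \<epsilon>" and A: "norm x \<le> A" and \<delta>: "norm (a - y) \<le> \<delta>"
  shows "norm (w * x - y) \<le> \<epsilon> * A + \<delta>"
proof -
  have "w * x - y = (w - a / x) * x + (a - y)" using x by (simp add: field_simps)
  also have "norm \<dots> \<le> norm (w - a / x) * norm x + norm (a - y)"
    by (metis norm_mult norm_triangle_ineq)
  also have "\<dots> \<le> \<epsilon> * A + \<delta>"
    using w A \<delta> order_trans[OF norm_ge_zero less_imp_le[OF w]] by (intro add_mono mult_mono) auto
  finally show ?thesis .
qed

locale pseudo_shift_system =
  fixes p :: real and N :: nat
    and f :: "nat \<Rightarrow> int \<Rightarrow> int"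
    and w :: "nat \<Rightarrow> int \<Rightarrow> 'a::{real_normed_field, banach}"
    and n :: "nat \<Rightarrow> nat"
  assumes p: "1 \<le> p"
    and f_bij: "\<forall>i\<in>{1..N}. bij (f i)"
    and w_bdd: "\<forall>i\<in>{1..N}. \<exists>B. \<forall>m. norm (w i m) \<le> B"
    and w_nz: "\<forall>i\<in>{1..N}. \<forall>m. w i m \<noteq> 0"
    and cond_a: "\<forall>i\<in>{1..N}. \<forall>m.
        filterlim (\<lambda>k. norm (Wpos (f i) (w i) m (n k))) at_top sequentially \<and>
        (\<lambda>k. norm (Wneg (f i) (w i) m (n k))) \<longlonglongrightarrow> 0"
    and cond_b: "\<forall>\<epsilon>>0. \<forall>(K::nat) (M::nat) (a::nat \<Rightarrow> int \<Rightarrow> 'a).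
        (\<forall>i\<in>{1..N}. \<forall>j\<in>{-int M..int M}. a i j \<noteq> 0) \<longrightarrow>
        (\<exists>k\<ge>K. \<forall>i\<in>{1..N}. \<forall>l\<in>{1..N}. i \<noteq> l \<longrightarrow>
           (\<forall>j \<in> (f l ^^ n k) ` {-int M..int M} \<inter> (f i ^^ n k) ` (UNIV - {-int M..int M}).
              norm (Wpos (f i) (w i) ((inv (f i) ^^ n k) j) (n k)
                    / Wpos (f l) (w l) ((inv (f l) ^^ n k) j) (n k)) < \<epsilon>) \<and>
           (\<forall>j \<in> (f l ^^ n k) ` {-int M..int M} \<inter> (f i ^^ n k) ` {-int M..int M}.
              norm (Wpos (f i) (w i) ((inv (f i) ^^ n k) j) (n k)
                    / Wpos (f l) (w l) ((inv (f l) ^^ n k) j) (n k)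
                    - a i ((inv (f i) ^^ n k) j) / a l ((inv (f l) ^^ n k) j)) < \<epsilon>))"
begin

abbreviation T :: "nat \<Rightarrow> (int \<Rightarrow> 'a) \<Rightarrow> (int \<Rightarrow> 'a)" where
  "T i \<equiv> pseudo_shift (f i) (w i)"

abbreviation P :: "nat \<Rightarrow> nat \<Rightarrow> int \<Rightarrow> int" where
  "P i k j \<equiv> (inv (f i) ^^ n k) j"

abbreviation W :: "nat \<Rightarrow> nat \<Rightarrow> int \<Rightarrow> 'a" where
  "W i k m \<equiv> Wpos (f i) (w i) m (n k)"

definition ratio_condition :: "real \<Rightarrow> nat \<Rightarrow> (nat \<Rightarrow> int \<Rightarrow> 'a) \<Rightarrow> nat \<Rightarrow> bool" where
  "ratio_condition \<epsilon> M a k \<longleftrightarrow> (\<forall>i\<in>{1..N}. \<forall>l\<in>{1..N}. i \<noteq> l \<longrightarrow>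
     (\<forall>j \<in> (f l ^^ n k) ` {-int M..int M} \<inter> (f i ^^ n k) ` (UNIV - {-int M..int M}).
        norm (W i k (P i k j) / W l k (P l k j)) < \<epsilon>) \<and>
     (\<forall>j \<in> (f l ^^ n k) ` {-int M..int M} \<inter> (f i ^^ n k) ` {-int M..int M}.
        norm (W i k (P i k j) / W l k (P l k j) - a i (P i k j) / a l (P l k j)) < \<epsilon>))"

lemma ratio_condition_frequently:
  assumes "\<epsilon> > 0" "\<And>i j. i \<in> {1..N} \<Longrightarrow> j \<in> {-int M..int M} \<Longrightarrow> a i j \<noteq> 0"
  obtains k where "k \<ge> K" "ratio_condition \<epsilon> M a k"
proof -
  have "\<exists>k\<ge>K. ratio_condition \<epsilon> M a k"
    unfolding ratio_condition_def by (rule cond_b[rule_format]) (use assms in auto)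
  then show ?thesis using that by blast
qed

lemma f_funpow_inv [simp]: "i \<in> {1..N} \<Longrightarrow> (f i ^^ m) ((inv (f i) ^^ m) j) = j"
  and inv_funpow_f [simp]: "i \<in> {1..N} \<Longrightarrow> (inv (f i) ^^ m) ((f i ^^ m) j) = j"
  by (simp_all add: f_bij funpow_inv_funpow inv_funpow_funpow)

lemma W_nonzero: "i \<in> {1..N} \<Longrightarrow> W i k m \<noteq> 0"
  using w_nz by (intro Wpos_nonzero) auto

lemma shift_funpow_c00_tendsto_0:
  assumes x: "x \<in> c00" and i: "i \<in> {1..N}"
  shows "(\<lambda>k. lp_norm p ((T i ^^ n k) x)) \<longlonglongrightarrow> 0"
proof -
  obtain M :: nat where M: "\<And>j. x j \<noteq> 0 \<Longrightarrow> \<bar>j\<bar> \<le> int M" using x by (auto simp: c00_def)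
  define I where "I = {-int M..int M}"
  have bound: "lp_norm p ((T i ^^ n k) x) \<le> (\<Sum>m\<in>I. norm (Wneg (f i) (w i) m (n k)) * norm (x m))" for k
  proof -
    have "lp_norm p ((T i ^^ n k) x) \<le> (\<Sum>j\<in>P i k ` I. norm ((T i ^^ n k) x j))"
    proof (rule lp_finite_support(2)[OF p])
      fix j assume "j \<notin> P i k ` I"
      have "(f i ^^ n k) j \<notin> I"
      proof
        assume "(f i ^^ n k) j \<in> I"
        then have "P i k ((f i ^^ n k) j) \<in> P i k ` I" by (rule imageI)
        then show False using \<open>j \<notin> P i k ` I\<close> i by simp
      qed
      then have "x ((f i ^^ n k) j) = 0" using M unfolding I_def by fastforce
      then show "(T i ^^ n k) x j = 0" by (simp add: pseudo_shift_funpow)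
    qed (simp add: I_def)
    also have "\<dots> = (\<Sum>m\<in>I. norm ((T i ^^ n k) x (P i k m)))"
    proof -
      have "inj_on (P i k) I" by (rule inj_onI) (metis f_funpow_inv[OF i])
      then show ?thesis by (simp add: sum.reindex)
    qed
    also have "\<dots> = (\<Sum>m\<in>I. norm (Wneg (f i) (w i) m (n k)) * norm (x m))"
      using i f_bij by (simp add: pseudo_shift_funpow Wpos_inv_funpow norm_mult)
    finally show ?thesis .
  qed
  have "(\<lambda>k. \<Sum>m\<in>I. norm (Wneg (f i) (w i) m (n k)) * norm (x m)) \<longlonglongrightarrow> 0"
    using cond_a i by (intro tendsto_null_sum tendsto_mult_left_zero) auto
  then show ?thesis
    by (rule Lim_null_comparison[rotated])
       (use bound in \<open>simp add: lp_norm_nonneg\<close>)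
qed

text \<open>The maps \<open>S\<^sub>k\<close> of the criterion: position \<open>(f i ^^ n k) m\<close> receives \<open>x\<^sub>i(m) / W i k m\<close>. Where
  several \<open>i\<close> compete for the same position the least one wins; condition (b) says that
  \<open>T l ^^ n k\<close> then still carries the entry close to \<open>x\<^sub>l\<close> for the losers \<open>l\<close>.\<close>

definition Sk :: "nat \<Rightarrow> (nat \<Rightarrow> int \<Rightarrow> 'a) \<Rightarrow> (int \<Rightarrow> 'a)" where
  "Sk k xs = (\<lambda>j. if \<exists>i\<in>{1..N}. xs i (P i k j) \<noteq> 0
      then (let i = (LEAST i. i \<in> {1..N} \<and> xs i (P i k j) \<noteq> 0) in xs i (P i k j) / W i k (P i k j))
      else 0)"

lemma Sk_cases:
  obtains (zero) "Sk k xs J = 0" "\<forall>i\<in>{1..N}. xs i (P i k J) = 0"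
  | (some) i where "i \<in> {1..N}" "xs i (P i k J) \<noteq> 0" "Sk k xs J = xs i (P i k J) / W i k (P i k J)"
proof (cases "\<exists>i\<in>{1..N}. xs i (P i k J) \<noteq> 0")
  case False then show ?thesis using zero by (auto simp: Sk_def)
next
  case True
  define i where "i = (LEAST i. i \<in> {1..N} \<and> xs i (P i k J) \<noteq> 0)"
  have "i \<in> {1..N} \<and> xs i (P i k J) \<noteq> 0" unfolding i_def by (rule LeastI_ex) (use True in blast)
  moreover have "Sk k xs J = xs i (P i k J) / W i k (P i k J)"
    using True by (simp add: Sk_def i_def Let_def)
  ultimately show ?thesis using some by blast
qed

lemma Sk_eq_0_outside:
  assumes supp: "\<And>i j. i \<in> {1..N} \<Longrightarrow> xs i j \<noteq> 0 \<Longrightarrow> \<bar>j\<bar> \<le> int M"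
    and J: "J \<notin> (\<Union>i\<in>{1..N}. (f i ^^ n k) ` {-int M..int M})"
  shows "Sk k xs J = 0"
proof (cases rule: Sk_cases[of k xs J])
  case (some i)
  then have "\<bar>P i k J\<bar> \<le> int M" using supp by blast
  then have "P i k J \<in> {-int M..int M}" by (simp add: abs_le_iff)
  then have "(f i ^^ n k) (P i k J) \<in> (\<Union>i\<in>{1..N}. (f i ^^ n k) ` {-int M..int M})"
    using some(1) by blast
  then show ?thesis using J some(1) by simp
qed

lemma c00_tuple_support:
  assumes "\<forall>i\<in>{1..N}. xs i \<in> c00"
  obtains M :: nat where "\<And>i j. i \<in> {1..N} \<Longrightarrow> xs i j \<noteq> 0 \<Longrightarrow> \<bar>j\<bar> \<le> int M"
proof -
  have "\<forall>i\<in>{1..N}. \<exists>M::nat. \<forall>j. xs i j \<noteq> 0 \<longrightarrow> \<bar>j\<bar> \<le> int M"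
    using assms by (simp add: c00_def)
  then obtain Mi where Mi: "\<forall>i\<in>{1..N}. \<forall>j. xs i j \<noteq> 0 \<longrightarrow> \<bar>j\<bar> \<le> int (Mi i)"
    by (rule bchoice_iff[THEN iffD1, elim_format]) blast
  have "\<bar>j\<bar> \<le> int (\<Sum>i\<in>{1..N}. Mi i)" if "i \<in> {1..N}" "xs i j \<noteq> 0" for i j
  proof -
    have "\<bar>j\<bar> \<le> int (Mi i)" using Mi that by blast
    moreover have "Mi i \<le> (\<Sum>i\<in>{1..N}. Mi i)" using that(1) by (intro member_le_sum) auto
    ultimately show ?thesis by linarith
  qed
  then show ?thesis using that by blast
qed

lemma Sk_in_lp:
  assumes "\<forall>i\<in>{1..N}. xs i \<in> c00"
  shows "Sk k xs \<in> lp p"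
proof -
  obtain M where "\<And>i j. i \<in> {1..N} \<Longrightarrow> xs i j \<noteq> 0 \<Longrightarrow> \<bar>j\<bar> \<le> int M"
    using c00_tuple_support[OF assms] by blast
  then show ?thesis
    by (intro lp_finite_support(1)[OF p, of "\<Union>i\<in>{1..N}. (f i ^^ n k) ` {-int M..int M}"]
        Sk_eq_0_outside) auto
qed


lemma shift_Sk_minus_cases:
  assumes l: "l \<in> {1..N}"
  obtains (zero) "(T l ^^ n k) (Sk k xs) j - xs l j = 0"
  | (other) i where "i \<in> {1..N}" "i \<noteq> l" "xs i (P i k ((f l ^^ n k) j)) \<noteq> 0"
    "(T l ^^ n k) (Sk k xs) j - xs l j =
       W l k j / W i k (P i k ((f l ^^ n k) j)) * xs i (P i k ((f l ^^ n k) j)) - xs l j"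
proof -
  define J where "J = (f l ^^ n k) j"
  have PJ: "P l k J = j" using l by (simp add: J_def)
  have shift: "(T l ^^ n k) (Sk k xs) j - xs l j = W l k j * Sk k xs J - xs l j"
    by (simp add: pseudo_shift_funpow J_def)
  show ?thesis
  proof (cases rule: Sk_cases[of k xs J])
    case zero
    then have "xs l j = 0" using l PJ by force
    then have "(T l ^^ n k) (Sk k xs) j - xs l j = 0" unfolding shift zero(1) by simp
    then show ?thesis by (rule that(1))
  next
    case (some i)
    show ?thesis
    proof (cases "i = l")
      case True
      then show ?thesis
        using some(3) PJ W_nonzero[OF l] by (intro that(1)) (simp add: shift)
    next
      case False
      have "xs i (P i k ((f l ^^ n k) j)) \<noteq> 0" using some(2) by (simp add: J_def)
      moreover have "(T l ^^ n k) (Sk k xs) j - xs l j =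
          W l k j / W i k (P i k ((f l ^^ n k) j)) * xs i (P i k ((f l ^^ n k) j)) - xs l j"
        using some(3) by (simp add: shift J_def)
      ultimately show ?thesis using that(2)[OF some(1) False] by blast
    qed
  qed
qed

lemma norm_shift_Sk_error_le:
  assumes supp: "\<And>i j. i \<in> {1..N} \<Longrightarrow> xs i j \<noteq> 0 \<Longrightarrow> \<bar>j\<bar> \<le> int M"
    and A: "\<And>i j. i \<in> {1..N} \<Longrightarrow> norm (xs i j) \<le> A" and A0: "A \<ge> 0"
    and \<epsilon>: "\<epsilon> > 0" and \<delta>: "\<delta> \<ge> 0"
    and k: "ratio_condition \<epsilon> M (\<lambda>i j. if xs i j \<noteq> 0 then xs i j else of_real \<delta>) k"
    and l: "l \<in> {1..N}"
  shows "norm ((T l ^^ n k) (Sk k xs) j - xs l j) \<le> \<epsilon> * A + \<delta>"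
proof (cases rule: shift_Sk_minus_cases[OF l, of k xs j, case_names zero other])
  case zero
  then show ?thesis using \<epsilon> A0 \<delta> by simp
next
  case (other i)
  define J where "J = (f l ^^ n k) j"
  define m where "m = P i k J"
  have PJ: "P l k J = j" using l by (simp add: J_def)
  have xm: "xs i m \<noteq> 0" using other(3) by (simp add: m_def J_def)
  then have "\<bar>m\<bar> \<le> int M" using supp other(1) by blast
  then have "m \<in> {-int M..int M}" by (simp add: abs_le_iff)
  moreover have "J = (f i ^^ n k) m" using other(1) by (simp add: m_def)
  ultimately have J_i: "J \<in> (f i ^^ n k) ` {-int M..int M}" by blast
  note ratio = k[unfolded ratio_condition_def, rule_format, OF l other(1) not_sym[OF other(2)]]
  obtain a where X: "norm (W l k j / W i k m - a / xs i m) < \<epsilon>" and a: "norm (a - xs l j) \<le> \<delta>"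
  proof (cases "\<bar>j\<bar> \<le> int M")
    case True
    define a where "a = (if xs l j \<noteq> 0 then xs l j else of_real \<delta>)"
    have "J \<in> (f l ^^ n k) ` {-int M..int M}" using True by (simp add: J_def abs_le_iff)
    then have "norm (W l k (P l k J) / W i k (P i k J) -
        (if xs l (P l k J) \<noteq> 0 then xs l (P l k J) else of_real \<delta>) /
        (if xs i (P i k J) \<noteq> 0 then xs i (P i k J) else of_real \<delta>)) < \<epsilon>"
      using conjunct2[OF ratio] J_i by blast
    then have "norm (W l k j / W i k m - a / xs i m) < \<epsilon>"
      unfolding PJ m_def[symmetric] using xm by (simp add: a_def)
    moreover have "norm (a - xs l j) \<le> \<delta>" using \<delta> by (simp add: a_def)
    ultimately show ?thesis by (rule that)
  next
    case False
    then have "xs l j = 0" using supp l by force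
    have "j \<in> UNIV - {-int M..int M}" using False by (auto simp: abs_le_iff)
    then have "J \<in> (f l ^^ n k) ` (UNIV - {-int M..int M})" unfolding J_def by (rule imageI)
    then have "norm (W l k (P l k J) / W i k (P i k J)) < \<epsilon>"
      using conjunct1[OF ratio] J_i by blast
    then have "norm (W l k j / W i k m - 0 / xs i m) < \<epsilon>" unfolding PJ m_def[symmetric] by simp
    moreover have "norm (0 - xs l j) \<le> \<delta>" using \<open>xs l j = 0\<close> \<delta> by simp
    ultimately show ?thesis by (rule that)
  qed
  have "(T l ^^ n k) (Sk k xs) j - xs l j = W l k j / W i k m * xs i m - xs l j"
    using other(4) by (simp add: m_def J_def)
  then show ?thesis using norm_mult_diff_le[OF xm X A[OF other(1)] a] by simp
qed

lemma norm_Sk_le: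
  assumes supp: "\<And>i j. i \<in> {1..N} \<Longrightarrow> xs i j \<noteq> 0 \<Longrightarrow> \<bar>j\<bar> \<le> int M"
    and A: "\<And>i j. i \<in> {1..N} \<Longrightarrow> norm (xs i j) \<le> A" and A0: "A \<ge> 0"
    and R: "R > 0" "\<And>i m. i \<in> {1..N} \<Longrightarrow> m \<in> {-int M..int M} \<Longrightarrow> R \<le> norm (W i k m)"
  shows "norm (Sk k xs J) \<le> A / R"
proof (cases rule: Sk_cases[of k xs J])
  case zero then show ?thesis using A0 R by simp
next
  case (some i)
  then have "\<bar>P i k J\<bar> \<le> int M" using supp by blast
  then have "R \<le> norm (W i k (P i k J))" using R(2) some(1) by (simp add: abs_le_iff)
  then have "norm (xs i (P i k J)) / norm (W i k (P i k J)) \<le> A / R"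
    using A[OF some(1)] R(1) A0 by (intro frac_le) auto
  then show ?thesis using some(3) by (simp add: norm_divide)
qed

lemma card_shifted_supports_le:
  "card (\<Union>i\<in>{1..N}. (f i ^^ n k) ` {-int M..int M}) \<le> N * (2 * M + 1)"
proof -
  have "card (\<Union>i\<in>{1..N}. (f i ^^ n k) ` {-int M..int M}) \<le>
      (\<Sum>i\<in>{1..N}. card ((f i ^^ n k) ` {-int M..int M}))"
    by (rule card_UN_le) simp
  also have "\<dots> \<le> (\<Sum>i\<in>{1..N}. card {-int M..int M})" by (intro sum_mono card_image_le) simp
  also have "card {-int M..int M} = 2 * M + 1" by (simp add: nat_add_distrib)
  finally show ?thesis by simp
qed

lemma shift_Sk_minus_eq_0_outside:
  assumes supp: "\<And>i j. i \<in> {1..N} \<Longrightarrow> xs i j \<noteq> 0 \<Longrightarrow> \<bar>j\<bar> \<le> int M" and l: "l \<in> {1..N}"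
    and j: "\<not> \<bar>j\<bar> \<le> int M" "(f l ^^ n k) j \<notin> (\<Union>i\<in>{1..N}. (f i ^^ n k) ` {-int M..int M})"
  shows "(T l ^^ n k) (Sk k xs) j - xs l j = 0"
proof -
  have "xs l j = 0" using supp[OF l] j(1) by blast
  moreover have "Sk k xs ((f l ^^ n k) j) = 0" using Sk_eq_0_outside[OF supp j(2)] .
  ultimately show ?thesis by (simp add: pseudo_shift_funpow)
qed

lemma c00_tuple_norm_bound:
  assumes "\<forall>i\<in>{1..N}. xs i \<in> c00"
  shows "\<exists>A\<ge>0. \<forall>i\<in>{1..N}. \<forall>j. norm (xs i j) \<le> A"
proof -
  obtain M where supp: "\<And>i j. i \<in> {1..N} \<Longrightarrow> xs i j \<noteq> 0 \<Longrightarrow> \<bar>j\<bar> \<le> int M"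
    using c00_tuple_support[OF assms] by blast
  define I where "I = {-int M..int M}"
  have "(\<Sum>i\<in>{1..N}. \<Sum>j\<in>I. norm (xs i j)) \<ge> 0" by (simp add: sum_nonneg)
  moreover have "norm (xs i j) \<le> (\<Sum>i\<in>{1..N}. \<Sum>j\<in>I. norm (xs i j))" if i: "i \<in> {1..N}" for i j
  proof (cases "xs i j = 0")
    case True then show ?thesis by (simp add: sum_nonneg)
  next
    case False
    then have "\<bar>j\<bar> \<le> int M" using supp[OF i] by blast
    then have "norm (xs i j) \<le> (\<Sum>j\<in>I. norm (xs i j))"
      by (intro member_le_sum) (auto simp: I_def abs_le_iff)
    also have "\<dots> \<le> (\<Sum>i\<in>{1..N}. \<Sum>j\<in>I. norm (xs i j))"
      using i by (intro member_le_sum sum_nonneg) auto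
    finally show ?thesis .
  qed
  ultimately show ?thesis by (intro exI[of _ "\<Sum>i\<in>{1..N}. \<Sum>j\<in>I. norm (xs i j)"]) blast
qed

lemma lp_norm_Sk_le:
  assumes supp: "\<And>i j. i \<in> {1..N} \<Longrightarrow> xs i j \<noteq> 0 \<Longrightarrow> \<bar>j\<bar> \<le> int M"
    and A: "\<And>i j. i \<in> {1..N} \<Longrightarrow> norm (xs i j) \<le> A" and A0: "A \<ge> 0"
    and R: "R > 0" "\<And>i m. i \<in> {1..N} \<Longrightarrow> m \<in> {-int M..int M} \<Longrightarrow> R \<le> norm (W i k m)"
  shows "lp_norm p (Sk k xs) \<le> real (N * (2 * M + 1)) * (A / R)"
proof -
  define F where "F = (\<Union>i\<in>{1..N}. (f i ^^ n k) ` {-int M..int M})"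
  have "lp_norm p (Sk k xs) \<le> card F * (A / R)"
  proof (rule lp_norm_le_card_mult[OF p])
    show "finite F" by (simp add: F_def)
    show "Sk k xs J = 0" if "J \<notin> F" for J using Sk_eq_0_outside[OF supp] that by (simp add: F_def)
    show "norm (Sk k xs J) \<le> A / R" for J
      by (rule norm_Sk_le[where M = M]) (use supp A A0 R in auto)
  qed
  also have "\<dots> \<le> real (N * (2 * M + 1)) * (A / R)"
  proof (rule mult_right_mono)
    show "real (card F) \<le> real (N * (2 * M + 1))"
      unfolding F_def by (simp only: of_nat_le_iff) (rule card_shifted_supports_le)
  qed (use A0 R(1) in simp)
  finally show ?thesis .
qed

lemma lp_norm_shift_Sk_error_le:
  assumes supp: "\<And>i j. i \<in> {1..N} \<Longrightarrow> xs i j \<noteq> 0 \<Longrightarrow> \<bar>j\<bar> \<le> int M"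
    and A: "\<And>i j. i \<in> {1..N} \<Longrightarrow> norm (xs i j) \<le> A" and A0: "A \<ge> 0"
    and \<epsilon>: "\<epsilon> > 0" and \<delta>: "\<delta> \<ge> 0"
    and k: "ratio_condition \<epsilon> M (\<lambda>i j. if xs i j \<noteq> 0 then xs i j else of_real \<delta>) k"
    and l: "l \<in> {1..N}"
  shows "lp_norm p (\<lambda>j. (T l ^^ n k) (Sk k xs) j - xs l j) \<le> real ((2 * M + 1) * (N + 1)) * (\<epsilon> * A + \<delta>)"
proof -
  define I where "I = {-int M..int M}"
  define F where "F = (\<Union>i\<in>{1..N}. (f i ^^ n k) ` I)"
  define G where "G = I \<union> P l k ` F"
  have F: "finite F" "card F \<le> N * (2 * M + 1)"
    unfolding F_def I_def by (simp, rule card_shifted_supports_le)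
  have "card G \<le> card I + card F"
    unfolding G_def using card_Un_le[of I "P l k ` F"] card_image_le[OF F(1), of "P l k"] by linarith
  also have "card I = 2 * M + 1" by (simp add: I_def nat_add_distrib)
  also have "2 * M + 1 + card F \<le> (2 * M + 1) * (N + 1)" using F(2) by (simp add: algebra_simps)
  finally have card_G: "real (card G) \<le> real ((2 * M + 1) * (N + 1))" by (simp only: of_nat_le_iff)
  have "lp_norm p (\<lambda>j. (T l ^^ n k) (Sk k xs) j - xs l j) \<le> card G * (\<epsilon> * A + \<delta>)"
  proof (rule lp_norm_le_card_mult[OF p])
    show "finite G" using F(1) by (simp add: G_def I_def)
    show "norm ((T l ^^ n k) (Sk k xs) j - xs l j) \<le> \<epsilon> * A + \<delta>" for j
      using supp A A0 \<epsilon> \<delta> k l by (intro norm_shift_Sk_error_le) auto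
    show "(T l ^^ n k) (Sk k xs) j - xs l j = 0" if "j \<notin> G" for j
    proof (rule shift_Sk_minus_eq_0_outside[OF supp l])
      show "\<not> \<bar>j\<bar> \<le> int M" using that by (auto simp: G_def I_def abs_le_iff)
      show "(f l ^^ n k) j \<notin> (\<Union>i\<in>{1..N}. (f i ^^ n k) ` {-int M..int M})"
      proof
        assume "(f l ^^ n k) j \<in> (\<Union>i\<in>{1..N}. (f i ^^ n k) ` {-int M..int M})"
        then have "P l k ((f l ^^ n k) j) \<in> P l k ` F" unfolding F_def I_def by (rule imageI)
        then show False using that l by (simp add: G_def)
      qed
    qed
  qed
  also have "\<dots> \<le> real ((2 * M + 1) * (N + 1)) * (\<epsilon> * A + \<delta>)"
    using card_G \<epsilon> A0 \<delta> by (intro mult_right_mono) auto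
  finally show ?thesis .
qed

text \<open>With \<open>C\<close> bounding the sizes of the supports involved, it suffices to make every entry of
  \<open>S\<^sub>k\<close> and of the errors \<open>(T l ^^ n k) (S\<^sub>k x) - x\<^sub>l\<close> at most \<open>2\<delta>\<close>, \<open>\<delta> = \<epsilon> / (2 (C + 1))\<close>: by condition (a) the
  weights \<open>W i k m\<close> on the support exceed \<open>(A + 1)/\<delta>\<close> for large \<open>k\<close>, and condition (b) is used
  with the scalars \<open>x\<^sub>i(j)\<close>, replaced by \<open>\<delta>\<close> where they vanish.\<close>

lemma Sk_blow_up:
  assumes \<epsilon>: "\<epsilon> > 0" and xs: "\<forall>i\<in>{1..N}. xs i \<in> c00"
  obtains k where "k \<ge> K" "lp_norm p (Sk k xs) < \<epsilon>"
    "\<And>l. l \<in> {1..N} \<Longrightarrow> lp_norm p (\<lambda>j. (T l ^^ n k) (Sk k xs) j - xs l j) < \<epsilon>"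
proof -
  obtain M where supp: "\<And>i j. i \<in> {1..N} \<Longrightarrow> xs i j \<noteq> 0 \<Longrightarrow> \<bar>j\<bar> \<le> int M"
    using c00_tuple_support[OF xs] by blast
  obtain A where A0: "A \<ge> 0" and A_bound: "\<forall>i\<in>{1..N}. \<forall>j. norm (xs i j) \<le> A"
    using c00_tuple_norm_bound[OF xs] by blast
  have A: "\<And>i j. i \<in> {1..N} \<Longrightarrow> norm (xs i j) \<le> A" using A_bound by blast
  define C :: real where "C = real ((2 * M + 1) * (N + 1))"
  define \<delta> where "\<delta> = \<epsilon> / (2 * (C + 1))"
  define \<epsilon>' where "\<epsilon>' = \<delta> / (A + 1)"
  have C0: "C \<ge> 0" by (simp add: C_def)
  have \<delta>: "\<delta> > 0" "C * (2 * \<delta>) < \<epsilon>" using \<epsilon> C0 by (simp_all add: \<delta>_def field_simps)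
  have \<epsilon>': "\<epsilon>' > 0" "A * \<epsilon>' \<le> \<delta>" using \<delta> A0 by (simp_all add: \<epsilon>'_def field_simps)
  have "eventually (\<lambda>k. \<forall>i\<in>{1..N}. \<forall>m\<in>{-int M..int M}. 1 / \<epsilon>' \<le> norm (W i k m)) sequentially"
    using cond_a by (intro eventually_ball_finite ballI) (auto simp: filterlim_at_top)
  then obtain K0 where K0: "\<forall>k\<ge>K0. \<forall>i\<in>{1..N}. \<forall>m\<in>{-int M..int M}. 1 / \<epsilon>' \<le> norm (W i k m)"
    unfolding eventually_sequentially ..
  have "\<And>i j. (if xs i j \<noteq> 0 then xs i j else of_real \<delta>) \<noteq> 0" using \<delta>(1) by simp
  then obtain k where k: "k \<ge> max K K0"
    and ratio: "ratio_condition \<epsilon>' M (\<lambda>i j. if xs i j \<noteq> 0 then xs i j else of_real \<delta>) k"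
    by (rule ratio_condition_frequently[OF \<epsilon>'(1)])
  have "lp_norm p (Sk k xs) \<le> real (N * (2 * M + 1)) * (A / (1 / \<epsilon>'))"
    by (rule lp_norm_Sk_le[where M = M]) (use supp A A0 K0 k \<epsilon>'(1) in auto)
  also have "\<dots> \<le> C * (2 * \<delta>)"
    using \<epsilon>' \<delta>(1) A0 by (intro mult_mono) (auto simp: C_def algebra_simps)
  finally have "lp_norm p (Sk k xs) < \<epsilon>" using \<delta>(2) by simp
  moreover have "lp_norm p (\<lambda>j. (T l ^^ n k) (Sk k xs) j - xs l j) < \<epsilon>" if l: "l \<in> {1..N}" for l
  proof -
    have "lp_norm p (\<lambda>j. (T l ^^ n k) (Sk k xs) j - xs l j) \<le> C * (\<epsilon>' * A + \<delta>)"
      unfolding C_def using \<epsilon>'(1) \<delta>(1) by (intro lp_norm_shift_Sk_error_le[OF supp A A0 _ _ ratio l]) auto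
    also have "\<dots> \<le> C * (2 * \<delta>)" using \<epsilon>'(2) C0 by (intro mult_left_mono) (auto simp: mult.commute)
    finally show ?thesis using \<delta>(2) by simp
  qed
  ultimately show ?thesis using that[of k] k by simp
qed

theorem dBC_criterion_pseudo_shifts:
  assumes n: "strict_mono n" "\<forall>k. 0 < n k"
  shows "dBC_criterion p N T"
proof -
  have bounded: "\<forall>i\<in>{1..N}. bounded_linear_lp p (T i)"
    using w_bdd f_bij pseudo_shift_bounded_linear[OF p] by blast
  have dense: "\<forall>y\<in>lp p. \<forall>\<epsilon>>0. \<exists>x\<in>c00. lp_norm p (\<lambda>j. x j - y j :: 'a) < \<epsilon>"
  proof (intro ballI allI impI)
    fix y :: "int \<Rightarrow> 'a" and \<epsilon> :: real assume "y \<in> lp p" "\<epsilon> > 0"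
    then obtain D :: "(int \<Rightarrow> 'a) set" where D: "D \<subseteq> c00" "\<exists>d\<in>D. lp_dist p y d < \<epsilon>"
      using lp_separable[OF p] by metis
    then obtain d where "d \<in> D" "lp_dist p y d < \<epsilon>" by blast
    then have "d \<in> c00" "lp_norm p (\<lambda>j. d j - y j) < \<epsilon>"
      using D(1) lp_dist_commute[OF p, of y d] by (auto simp: lp_dist_def)
    then show "\<exists>x\<in>c00. lp_norm p (\<lambda>j. x j - y j) < \<epsilon>" by blast
  qed
  have Sk: "\<forall>k xs. (\<forall>i\<in>{1..N}. xs i \<in> c00) \<longrightarrow> Sk k xs \<in> lp p"
    using Sk_in_lp by blast
  have collapse: "\<forall>x\<in>c00. \<forall>i\<in>{1..N}. (\<lambda>k. lp_norm p ((T i ^^ n k) x)) \<longlonglongrightarrow> 0"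
    using shift_funpow_c00_tendsto_0 by blast
  have blow_up: "\<forall>\<epsilon>>0. \<forall>K::nat. \<forall>xs. (\<forall>i\<in>{1..N}. xs i \<in> c00) \<longrightarrow>
      (\<exists>k\<ge>K. lp_norm p (Sk k xs) < \<epsilon> \<and>
        (\<forall>i\<in>{1..N}. lp_norm p (\<lambda>j. (T i ^^ n k) (Sk k xs) j - xs i j) < \<epsilon>))"
  proof (intro allI impI)
    fix \<epsilon> :: real and K :: nat and xs :: "nat \<Rightarrow> int \<Rightarrow> 'a" assume "\<epsilon> > 0" "\<forall>i\<in>{1..N}. xs i \<in> c00"
    then obtain k where "k \<ge> K" "lp_norm p (Sk k xs) < \<epsilon>"
      "\<And>l. l \<in> {1..N} \<Longrightarrow> lp_norm p (\<lambda>j. (T l ^^ n k) (Sk k xs) j - xs l j) < \<epsilon>"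
      by (rule Sk_blow_up[where K = K]) auto
    then show "\<exists>k\<ge>K. lp_norm p (Sk k xs) < \<epsilon> \<and>
        (\<forall>i\<in>{1..N}. lp_norm p (\<lambda>j. (T i ^^ n k) (Sk k xs) j - xs i j) < \<epsilon>)" by blast
  qed
  show ?thesis
    unfolding dBC_criterion_def
    using bounded n c00_subset_lp[OF p] dense Sk collapse blow_up by blast
qed
end

theorem theorem2p4:
  fixes p :: real and N :: nat
    and f :: "nat \<Rightarrow> int \<Rightarrow> int"
    and w :: "nat \<Rightarrow> int \<Rightarrow> 'a::{real_normed_field, banach}"
    and n :: "nat \<Rightarrow> nat"
  assumes p: "1 \<le> p"
    and N: "N > 2"
    and f_bij: "\<forall>i\<in>{1..N}. bij (f i)"
    and w_bdd: "\<forall>i\<in>{1..N}. \<exists>B. \<forall>m. norm (w i m) \<le> B"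
    and w_nz: "\<forall>i\<in>{1..N}. \<forall>m. w i m \<noteq> 0"
    and n_mono: "strict_mono n"
    and n_pos: "\<forall>k. 0 < n k"
    and cond_a: "\<forall>i\<in>{1..N}. \<forall>m.
        filterlim (\<lambda>k. norm (Wpos (f i) (w i) m (n k))) at_top sequentially \<and>
        (\<lambda>k. norm (Wneg (f i) (w i) m (n k))) \<longlonglongrightarrow> 0"
    and cond_b: "\<forall>\<epsilon>>0. \<forall>(K::nat) (M::nat) (a::nat \<Rightarrow> int \<Rightarrow> 'a).
        (\<forall>i\<in>{1..N}. \<forall>j\<in>{-int M..int M}. a i j \<noteq> 0) \<longrightarrow>
        (\<exists>k\<ge>K. \<forall>i\<in>{1..N}. \<forall>l\<in>{1..N}. i \<noteq> l \<longrightarrow>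
           (\<forall>j \<in> (f l ^^ n k) ` {-int M..int M} \<inter> (f i ^^ n k) ` (UNIV - {-int M..int M}).
              norm (Wpos (f i) (w i) ((inv (f i) ^^ n k) j) (n k)
                    / Wpos (f l) (w l) ((inv (f l) ^^ n k) j) (n k)) < \<epsilon>) \<and>
           (\<forall>j \<in> (f l ^^ n k) ` {-int M..int M} \<inter> (f i ^^ n k) ` {-int M..int M}.
              norm (Wpos (f i) (w i) ((inv (f i) ^^ n k) j) (n k)
                    / Wpos (f l) (w l) ((inv (f l) ^^ n k) j) (n k)
                    - a i ((inv (f i) ^^ n k) j) / a l ((inv (f l) ^^ n k) j)) < \<epsilon>))"
  shows "dBC_criterion p N (\<lambda>i. pseudo_shift (f i) (w i))
       \<and> disjoint_hypercyclic p N (\<lambda>i. pseudo_shift (f i) (w i))"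
proof -
  interpret pseudo_shift_system p N f w n
    using p f_bij w_bdd w_nz cond_a cond_b by (rule pseudo_shift_system.intro)
  have "dBC_criterion p N (\<lambda>i. pseudo_shift (f i) (w i))"
    by (rule dBC_criterion_pseudo_shifts[OF n_mono n_pos])
  then show ?thesis using dBC_criterion_imp_disjoint_hypercyclic[OF p] by blast
qed

end
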